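(* Let $\vec G$ be any orientation of the Coxeter diagram $s_1-\cdots-s_{n-1}$ of $S_n$, with up indices determined as described below. For each transposition $(m,M)$ with $1\le m<M\le n$, there is a unique join-irreducible $\gamma$ of the weak order on $S_n$ that is not contracted by $\Theta(\vec G)$ and whose associated left reflection is $(m,M)$. The subset associated to this $\gamma$ is $A=\{m\}\cup\{b\in(m,M): b \text{ up}\}\cup(M,n]$.
   Context: Weak order on $S_n$: $x\le y$ iff $I(x)\subseteq I(y)$, $I(x)=\{(x_j,x_i):i<j,x_i>x_j\}$. An element is join-irreducible if it covers exactly one element $\gamma_*$. Join-irreducibles of $S_n$ correspond bijectively to subsets $A\subseteq[n]$ with $M:=\max([n]\setminus A)>m:=\min A$: $\gamma$ lists the elements of $[n]\setminus A$ in increasing order followed by the elements of $A$ in increasing order (one-line notation); its associated left reflection is the transposition $(m,M)$ (equivalently $\gamma s\gamma^{-1}$ for its unique right descent $s$). A congruence $\Theta$ contracts $\gamma$ if $\gamma\equiv\gamma_*$. $\Theta(\vec G)$ is the smallest lattice congruence of the weak order with $t\equiv ts$ for each directed edge $s\to t$ of $\vec G$, where $s_i=(i,i+1)$. For $b\in[2,n-1]$, $b$ is up if $s_b\to s_{b-1}$ in $\vec G$ and down if $s_{b-1}\to s_b$. *)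

theory Defs
  imports Main "HOL-Combinatorics.Transposition"
begin

text \<open>Permutations of [n] = {1..n}, as functions nat => nat fixing everything outside {1..n};
  w i is the i-th entry of the one-line notation. Products are function composition.\<close>

definition perms :: "nat \<Rightarrow> (nat \<Rightarrow> nat) set" where
  "perms n = {w. bij_betw w {1..n} {1..n} \<and> (\<forall>i. i \<notin> {1..n} \<longrightarrow> w i = i)}"

definition inv_set :: "nat \<Rightarrow> (nat \<Rightarrow> nat) \<Rightarrow> (nat \<times> nat) set" where
  "inv_set n x = {(x j, x i) | i j. 1 \<le> i \<and> i < j \<and> j \<le> n \<and> x i > x j}"

definition weak_le :: "nat \<Rightarrow> (nat \<Rightarrow> nat) \<Rightarrow> (nat \<Rightarrow> nat) \<Rightarrow> bool" where
  "weak_le n x y \<longleftrightarrow> inv_set n x \<subseteq> inv_set n y"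

definition weak_less :: "nat \<Rightarrow> (nat \<Rightarrow> nat) \<Rightarrow> (nat \<Rightarrow> nat) \<Rightarrow> bool" where
  "weak_less n x y \<longleftrightarrow> weak_le n x y \<and> x \<noteq> y"

definition covers :: "nat \<Rightarrow> (nat \<Rightarrow> nat) \<Rightarrow> (nat \<Rightarrow> nat) \<Rightarrow> bool" where
  "covers n y x \<longleftrightarrow> x \<in> perms n \<and> y \<in> perms n \<and> weak_less n x y \<and>
     \<not> (\<exists>z \<in> perms n. weak_less n x z \<and> weak_less n z y)"

definition join_irreducible :: "nat \<Rightarrow> (nat \<Rightarrow> nat) \<Rightarrow> bool" where
  "join_irreducible n g \<longleftrightarrow> g \<in> perms n \<and> (\<exists>! x. covers n g x)"

definition lower_cover :: "nat \<Rightarrow> (nat \<Rightarrow> nat) \<Rightarrow> (nat \<Rightarrow> nat)" where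
  "lower_cover n g = (THE x. covers n g x)"

definition is_join :: "nat \<Rightarrow> (nat \<Rightarrow> nat) \<Rightarrow> (nat \<Rightarrow> nat) \<Rightarrow> (nat \<Rightarrow> nat) \<Rightarrow> bool" where
  "is_join n x y j \<longleftrightarrow> j \<in> perms n \<and> weak_le n x j \<and> weak_le n y j \<and>
     (\<forall>u \<in> perms n. weak_le n x u \<and> weak_le n y u \<longrightarrow> weak_le n j u)"

definition is_meet :: "nat \<Rightarrow> (nat \<Rightarrow> nat) \<Rightarrow> (nat \<Rightarrow> nat) \<Rightarrow> (nat \<Rightarrow> nat) \<Rightarrow> bool" where
  "is_meet n x y j \<longleftrightarrow> j \<in> perms n \<and> weak_le n j x \<and> weak_le n j y \<and>
     (\<forall>u \<in> perms n. weak_le n u x \<and> weak_le n u y \<longrightarrow> weak_le n u j)"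

definition lattice_congruence :: "nat \<Rightarrow> ((nat \<Rightarrow> nat) \<times> (nat \<Rightarrow> nat)) set \<Rightarrow> bool" where
  "lattice_congruence n \<Theta> \<longleftrightarrow> equiv (perms n) \<Theta> \<and>
     (\<forall>x y z j j'. (x, y) \<in> \<Theta> \<longrightarrow> z \<in> perms n \<longrightarrow> is_join n x z j \<longrightarrow> is_join n y z j'
        \<longrightarrow> (j, j') \<in> \<Theta>) \<and>
     (\<forall>x y z j j'. (x, y) \<in> \<Theta> \<longrightarrow> z \<in> perms n \<longrightarrow> is_meet n x z j \<longrightarrow> is_meet n y z j'
        \<longrightarrow> (j, j') \<in> \<Theta>)"

definition simple_transp :: "nat \<Rightarrow> (nat \<Rightarrow> nat)" where
  "simple_transp i = transpose i (Suc i)"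

text \<open>An orientation of the Coxeter diagram s_1 - ... - s_(n-1) is encoded by a predicate
  up on {2..n-1}: up b means the edge s_b -> s_(b-1), not up b means s_(b-1) -> s_b. \<close>
definition diagram_edges :: "nat \<Rightarrow> (nat \<Rightarrow> bool) \<Rightarrow> ((nat \<Rightarrow> nat) \<times> (nat \<Rightarrow> nat)) set" where
  "diagram_edges n up =
     {(simple_transp b, simple_transp (b - 1)) | b. 2 \<le> b \<and> b \<le> n - 1 \<and> up b} \<union>
     {(simple_transp (b - 1), simple_transp b) | b. 2 \<le> b \<and> b \<le> n - 1 \<and> \<not> up b}"

definition Theta_G :: "nat \<Rightarrow> (nat \<Rightarrow> bool) \<Rightarrow> ((nat \<Rightarrow> nat) \<times> (nat \<Rightarrow> nat)) set" where
  "Theta_G n up = \<Inter> {\<Theta>. lattice_congruence n \<Theta> \<and>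
       (\<forall>(s, t) \<in> diagram_edges n up. (t, t \<circ> s) \<in> \<Theta>)}"

definition contracts :: "nat \<Rightarrow> ((nat \<Rightarrow> nat) \<times> (nat \<Rightarrow> nat)) set \<Rightarrow> (nat \<Rightarrow> nat) \<Rightarrow> bool" where
  "contracts n \<Theta> g \<longleftrightarrow> (g, lower_cover n g) \<in> \<Theta>"

definition has_left_reflection :: "nat \<Rightarrow> (nat \<Rightarrow> nat) \<Rightarrow> (nat \<Rightarrow> nat) \<Rightarrow> bool" where
  "has_left_reflection n g t \<longleftrightarrow>
     (\<exists>i. 1 \<le> i \<and> i < n \<and> g i > g (Suc i) \<and> t = g \<circ> simple_transp i \<circ> inv g)"

definition gamma_of :: "nat \<Rightarrow> nat set \<Rightarrow> (nat \<Rightarrow> nat)" where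
  "gamma_of n A = (\<lambda>i. if i \<in> {1..n}
      then (sorted_list_of_set ({1..n} - A) @ sorted_list_of_set A) ! (i - 1) else i)"

end

theory Submission
  imports Defs "HOL-Combinatorics.Permutations"
begin

text \<open>Inversion sets identify the weak order on \<open>S\<^sub>n\<close> with the biclosed subsets of
  \<open>{(p,q). 1 \<le> p < q \<le> n}\<close>, joins being transitive closures of unions. A join-irreducible
  with left reflection \<open>(m,M)\<close> has a single descent, where \<open>M\<close> is followed by \<open>m\<close>; its
  inversions are the pairs cut by the set of entries after the descent, an arc
  \<open>{m} \<union> S \<union> (M,n]\<close> with \<open>S \<subseteq> (m,M)\<close>, and its lower cover drops the inversion \<open>(m,M)\<close>.

  Call an inversion \<open>(p,q)\<close> forced if some \<open>d\<close> between \<open>p\<close> and \<open>q\<close> is up with \<open>(p,d)\<close>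
  inverted, or down with \<open>(d,q)\<close> inverted. Adding a forced inversion leaves the unforced ones
  unchanged, and the equivalence generated by such additions is a lattice congruence containing
  the generators of \<open>\<Theta>(G)\<close>. When \<open>S\<close> consists of the up elements of \<open>(m,M)\<close>, the inversion
  \<open>(m,M)\<close> is unforced, so this join-irreducible is not contracted.

  Conversely, if \<open>S\<close> disagrees with the orientation at \<open>b\<close>, the generator at \<open>b\<close> contracts the
  join-irreducible of the arc from \<open>b - 1\<close> to \<open>b + 1\<close>, and polygon forcing in hexagonal
  intervals propagates the contraction to longer and longer arcs, up to the one from \<open>m\<close>
  to \<open>M\<close>.\<close>

section \<open>Inversion sets\<close>

definition inversion_pairs :: "nat \<Rightarrow> (nat \<times> nat) set" where
  "inversion_pairs n = {(p,q). 1 \<le> p \<and> p < q \<and> q \<le> n}"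

definition rank_inversions :: "nat \<Rightarrow> (nat \<Rightarrow> 'a::linorder) \<Rightarrow> (nat \<times> nat) set" where
  "rank_inversions n r = {(p,q). 1 \<le> p \<and> p < q \<and> q \<le> n \<and> r q < r p}"

definition coclosed :: "(nat \<times> nat) set \<Rightarrow> bool" where
  "coclosed S \<longleftrightarrow> (\<forall>p q r. (p,r) \<in> S \<longrightarrow> p < q \<longrightarrow> q < r \<longrightarrow> (p,q) \<in> S \<or> (q,r) \<in> S)"

definition biclosed :: "nat \<Rightarrow> (nat \<times> nat) set \<Rightarrow> bool" where
  "biclosed n S \<longleftrightarrow> S \<subseteq> inversion_pairs n \<and> trans S \<and> coclosed S"

lemma coclosedD: "coclosed S \<Longrightarrow> (p,r) \<in> S \<Longrightarrow> p < q \<Longrightarrow> q < r \<Longrightarrow> (p,q) \<in> S \<or> (q,r) \<in> S"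
  unfolding coclosed_def by blast

lemma biclosedD:
  assumes "biclosed n S"
  shows "S \<subseteq> inversion_pairs n" "(p,q) \<in> S \<Longrightarrow> (q,r) \<in> S \<Longrightarrow> (p,r) \<in> S"
    "(p,r) \<in> S \<Longrightarrow> p < q \<Longrightarrow> q < r \<Longrightarrow> (p,q) \<in> S \<or> (q,r) \<in> S"
  using assms unfolding biclosed_def by (auto dest: transD coclosedD)

lemma perms_iff_permutes: "w \<in> perms n \<longleftrightarrow> w permutes {1..n}"
proof
  assume "w \<in> perms n"
  then show "w permutes {1..n}" unfolding perms_def
    by (intro bij_imp_permutes) auto
next
  assume "w permutes {1..n}"
  then show "w \<in> perms n" unfolding perms_def
    using permutes_imp_bij permutes_not_in by fastforce
qed

lemma perms_in: "w \<in> perms n \<Longrightarrow> i \<in> {1..n} \<Longrightarrow> w i \<in> {1..n}"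
  by (metis perms_iff_permutes permutes_in_image)

lemma perms_inj: "w \<in> perms n \<Longrightarrow> w i = w j \<Longrightarrow> i = j"
  by (metis perms_iff_permutes permutes_inverses(2))

lemma id_in_perms: "id \<in> perms n"
  by (simp add: perms_iff_permutes)

lemma inv_set_eq_rank_inversions:
  assumes w: "w \<in> perms n"
  shows "inv_set n w = rank_inversions n (inv w)"
proof (intro set_eqI iffI; clarify)
  have P: "w permutes {1..n}" using w by (simp add: perms_iff_permutes)
  fix p q
  {
    assume "(p,q) \<in> inv_set n w"
    then obtain i j where ij: "p = w j" "q = w i" "1 \<le> i" "i < j" "j \<le> n" "w i > w j"
      unfolding inv_set_def by blast
    then have "inv w q = i" "inv w p = j" "p \<in> {1..n}" "q \<in> {1..n}"
      using P perms_in[OF w] by (auto simp: permutes_inverses)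
    then show "(p,q) \<in> rank_inversions n (inv w)" using ij unfolding rank_inversions_def by auto
  next
    assume "(p,q) \<in> rank_inversions n (inv w)"
    then have k: "1 \<le> p" "p < q" "q \<le> n" "inv w q < inv w p" unfolding rank_inversions_def by auto
    then have "inv w q \<in> {1..n}" "inv w p \<in> {1..n}" "w (inv w q) = q" "w (inv w p) = p"
      using P permutes_inv[OF P] by (auto simp: permutes_inverses dest: permutes_in_image)
    then show "(p,q) \<in> inv_set n w" unfolding inv_set_def using k
      by (intro CollectI exI[of _ "inv w q"] exI[of _ "inv w p"]) auto
  }
qed

lemma inv_set_iff:
  "w \<in> perms n \<Longrightarrow> (p,q) \<in> inv_set n w \<longleftrightarrow> 1 \<le> p \<and> p < q \<and> q \<le> n \<and> inv w q < inv w p"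
  by (simp add: inv_set_eq_rank_inversions rank_inversions_def)

lemma rank_inversions_biclosed: "biclosed n (rank_inversions n r)"
proof -
  have "r q < r p \<or> r s < r q" if "r s < r p" for p q s
    using that by (meson leI le_less_trans)
  then show ?thesis
    unfolding biclosed_def coclosed_def rank_inversions_def inversion_pairs_def trans_def
    by (auto 4 3)
qed

lemma inv_set_biclosed: "w \<in> perms n \<Longrightarrow> biclosed n (inv_set n w)"
  by (simp add: inv_set_eq_rank_inversions rank_inversions_biclosed)

lemma inv_set_subset: "w \<in> perms n \<Longrightarrow> inv_set n w \<subseteq> inversion_pairs n"
  using inv_set_biclosed biclosedD(1) by blast

lemma finite_inversion_pairs: "finite (inversion_pairs n)"
  by (rule finite_subset[of _ "{1..n} \<times> {1..n}"]) (auto simp: inversion_pairs_def)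

text \<open>The witness lists \<open>{1..n}\<close> in the order \<open>R\<close>: the position of \<open>v\<close> is one more than
  the number of its \<open>R\<close>-predecessors.\<close>

lemma strict_total_order_realizable:
  fixes R :: "nat \<Rightarrow> nat \<Rightarrow> bool"
  assumes irrefl: "\<And>u. \<not> R u u"
    and trans: "\<And>u v x. u \<in> {1..n} \<Longrightarrow> v \<in> {1..n} \<Longrightarrow> x \<in> {1..n} \<Longrightarrow> R u v \<Longrightarrow> R v x \<Longrightarrow> R u x"
    and total: "\<And>u v. u \<in> {1..n} \<Longrightarrow> v \<in> {1..n} \<Longrightarrow> u \<noteq> v \<Longrightarrow> R u v \<or> R v u"
  shows "\<exists>w \<in> perms n. inv_set n w = {(p,q). 1 \<le> p \<and> p < q \<and> q \<le> n \<and> R q p}"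
proof -
  define pos where "pos v = (if v \<in> {1..n} then Suc (card {u \<in> {1..n}. R u v}) else v)" for v
  have mono: "pos u < pos v" if "u \<in> {1..n}" "v \<in> {1..n}" "R u v" for u v
  proof -
    have "{x \<in> {1..n}. R x u} \<subset> {x \<in> {1..n}. R x v}"
      using that trans irrefl by blast
    then have "card {x \<in> {1..n}. R x u} < card {x \<in> {1..n}. R x v}"
      by (intro psubset_card_mono) auto
    then show ?thesis using that unfolding pos_def by simp
  qed
  have "inj_on pos {1..n}"
    by (rule inj_onI) (metis total mono less_irrefl)
  moreover have "pos v \<in> {1..n}" if "v \<in> {1..n}" for v
  proof -
    have "card {u \<in> {1..n}. R u v} \<le> card ({1..n} - {v})"
      using irrefl by (intro card_mono) auto
    then show ?thesis using that unfolding pos_def by auto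
  qed
  ultimately have P: "pos permutes {1..n}"
    by (intro inj_imp_permutes) (auto simp: pos_def)
  have key: "pos q < pos p \<longleftrightarrow> R q p" if "p \<in> {1..n}" "q \<in> {1..n}" "p \<noteq> q" for p q
    using total[OF that] mono that by (meson less_asym)
  have "inv pos \<in> perms n" "inv (inv pos) = pos"
    using P by (simp_all add: perms_iff_permutes permutes_inv permutes_inv_inv)
  moreover have "rank_inversions n pos = {(p,q). 1 \<le> p \<and> p < q \<and> q \<le> n \<and> R q p}"
    unfolding rank_inversions_def using key by auto
  ultimately show ?thesis by (metis inv_set_eq_rank_inversions)
qed

lemma biclosed_realizable:
  assumes "biclosed n S"
  shows "\<exists>w \<in> perms n. inv_set n w = S"
proof -
  define before where "before u v \<longleftrightarrow> (u < v \<and> (u,v) \<notin> S) \<or> (v < u \<and> (v,u) \<in> S)" for u v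
  have "\<exists>w \<in> perms n. inv_set n w = {(p,q). 1 \<le> p \<and> p < q \<and> q \<le> n \<and> before q p}"
  proof (rule strict_total_order_realizable)
    fix u v x assume "before u v" "before v x"
    then show "before u x" using biclosedD[OF assms] unfolding before_def
      by (smt (verit) linorder_neqE_nat order.strict_trans)
  qed (auto simp: before_def)
  moreover have "{(p,q). 1 \<le> p \<and> p < q \<and> q \<le> n \<and> before q p} = S"
    using biclosedD(1)[OF assms] unfolding before_def inversion_pairs_def by auto
  ultimately show ?thesis by simp
qed

lemma rank_inversions_realizable: "\<exists>w \<in> perms n. inv_set n w = rank_inversions n r"
  using biclosed_realizable rank_inversions_biclosed by blast

lemma card_permutes_below:
  assumes P: "P permutes {1..n}" and v: "v \<in> {1..n}"
  shows "card {u \<in> {1..n}. P u < P v} = P v - 1"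
proof -
  have "P ` {u \<in> {1..n}. P u < P v} = {1..<P v}"
  proof (intro equalityI subsetI)
    fix y assume y: "y \<in> {1..<P v}"
    moreover have "P v \<in> {1..n}" using P v by (rule permutes_in_image[THEN iffD2])
    ultimately have "y \<in> {1..n}" by auto
    then have "inv P y \<in> {1..n}" "P (inv P y) = y"
      using P permutes_in_image[OF permutes_inv[OF P]] by (auto simp: permutes_inverses)
    then show "y \<in> P ` {u \<in> {1..n}. P u < P v}" using y by (intro image_eqI[of _ _ "inv P y"]) auto
  qed (use P in \<open>auto dest: permutes_in_image\<close>)
  moreover have "inj_on P {u \<in> {1..n}. P u < P v}" using P permutes_inj_on by blast
  ultimately show ?thesis by (metis card_image card_atLeastLessThan)
qed

lemma inv_set_inj:
  assumes w: "w \<in> perms n" and w': "w' \<in> perms n" and eq: "inv_set n w = inv_set n w'"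
  shows "w = w'"
proof -
  define P P' where "P = inv w" and "P' = inv w'"
  have PP: "P permutes {1..n}" "P' permutes {1..n}"
    unfolding P_def P'_def using w w' by (simp_all add: perms_iff_permutes permutes_inv)
  have ranks: "rank_inversions n P = rank_inversions n P'"
    using eq w w' by (simp add: inv_set_eq_rank_inversions P_def P'_def)
  have cmp: "P u < P v \<longleftrightarrow> P' u < P' v" if "u \<in> {1..n}" "v \<in> {1..n}" for u v
  proof (cases u v rule: linorder_cases)
    case less
    then have "P v < P u \<longleftrightarrow> P' v < P' u"
      using ranks that unfolding rank_inversions_def by (auto simp: set_eq_iff)
    moreover have "P u \<noteq> P v" "P' u \<noteq> P' v" using PP less
      by (metis less_irrefl permutes_inverses(2))+
    ultimately show ?thesis by auto
  next
    case greater
    then show ?thesis using ranks that unfolding rank_inversions_def by (auto simp: set_eq_iff)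
  qed simp
  have "P v = P' v" for v
  proof (cases "v \<in> {1..n}")
    case True
    have "{u \<in> {1..n}. P u < P v} = {u \<in> {1..n}. P' u < P' v}" using cmp True by auto
    moreover have "P v \<ge> 1" "P' v \<ge> 1" using PP True by (auto dest: permutes_in_image)
    ultimately show ?thesis using card_permutes_below[OF PP(1) True] card_permutes_below[OF PP(2) True]
      by simp
  qed (use PP in \<open>simp add: permutes_not_in\<close>)
  then show ?thesis
    using w w' unfolding P_def P'_def by (metis ext perms_iff_permutes permutes_inv_inv)
qed

lemma simple_transp_less_iff:
  "x \<noteq> y \<Longrightarrow> simple_transp i x < simple_transp i y \<longleftrightarrow> (if {x,y} = {i, Suc i} then y < x else x < y)"
  unfolding simple_transp_def transpose_def by (auto simp: doubleton_eq_iff)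

lemma simple_transp_permutes: "1 \<le> i \<Longrightarrow> i < n \<Longrightarrow> simple_transp i permutes {1..n}"
  unfolding simple_transp_def by (intro permutes_swap_id) auto

lemma perms_comp_simple_transp:
  "w \<in> perms n \<Longrightarrow> 1 \<le> i \<Longrightarrow> i < n \<Longrightarrow> w \<circ> simple_transp i \<in> perms n"
  by (simp add: perms_iff_permutes permutes_compose simple_transp_permutes del: One_nat_def)

lemma simple_transp_in_perms: "1 \<le> i \<Longrightarrow> i < n \<Longrightarrow> simple_transp i \<in> perms n"
  using perms_comp_simple_transp[OF id_in_perms] by simp

lemma inv_set_comp_simple_transp_iff:
  assumes w: "w \<in> perms n" and i: "1 \<le> i" "i < n" and pq: "1 \<le> p" "p < q" "q \<le> n"
  shows "(p,q) \<in> inv_set n (w \<circ> simple_transp i) \<longleftrightarrow>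
      (if {p,q} = {w i, w (Suc i)} then (p,q) \<notin> inv_set n w else (p,q) \<in> inv_set n w)"
proof -
  define t where "t = simple_transp i"
  define P where "P = inv w"
  have W: "w permutes {1..n}" using w by (simp add: perms_iff_permutes)
  have inv_comp: "inv (w \<circ> t) = t \<circ> P"
    using W simple_transp_permutes[OF i] unfolding P_def t_def simple_transp_def
    by (simp add: o_inv_distrib permutes_bij)
  have P_w: "P (w i) = i" "P (w (Suc i)) = Suc i"
    using W unfolding P_def by (auto simp: permutes_inverses)
  have ne: "P p \<noteq> P q" using pq W unfolding P_def by (metis permutes_inv_eq less_irrefl)
  have swapped: "{P p, P q} = {i, Suc i} \<longleftrightarrow> {p,q} = {w i, w (Suc i)}"
  proof
    assume "{P p, P q} = {i, Suc i}"
    then have "{w (P p), w (P q)} = {w i, w (Suc i)}" by (metis image_insert image_empty)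
    then show "{p,q} = {w i, w (Suc i)}" using W unfolding P_def by (simp add: permutes_inverses)
  qed (use P_w in \<open>metis image_insert image_empty\<close>)
  have "(p,q) \<in> inv_set n (w \<circ> t) \<longleftrightarrow> t (P q) < t (P p)"
    using perms_comp_simple_transp[OF w i] pq unfolding t_def[symmetric]
    by (simp add: inv_set_iff inv_comp)
  also have "\<dots> \<longleftrightarrow> (if {P q, P p} = {i, Suc i} then P p < P q else P q < P p)"
    unfolding t_def using ne by (intro simple_transp_less_iff) auto
  also have "\<dots> \<longleftrightarrow> (if {p,q} = {w i, w (Suc i)} then \<not> P q < P p else P q < P p)"
    using swapped ne by (auto simp: insert_commute)
  also have "\<dots> \<longleftrightarrow>
      (if {p,q} = {w i, w (Suc i)} then (p,q) \<notin> inv_set n w else (p,q) \<in> inv_set n w)"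
    using w pq by (simp add: inv_set_iff P_def)
  finally show ?thesis unfolding t_def .
qed

lemma inv_set_comp_simple_transp:
  assumes w: "w \<in> perms n" and i: "1 \<le> i" "i < n"
  shows "inv_set n (w \<circ> simple_transp i) =
    (if w i < w (Suc i) then insert (w i, w (Suc i)) (inv_set n w)
     else inv_set n w - {(w (Suc i), w i)})"
proof (intro set_eqI, clarify)
  have wi: "w i \<in> {1..n}" "w (Suc i) \<in> {1..n}" "w i \<noteq> w (Suc i)"
    using i perms_in[OF w] perms_inj[OF w, of i "Suc i"] by auto
  have w_inv: "(w i, w (Suc i)) \<notin> inv_set n w"
    "(w (Suc i), w i) \<in> inv_set n w \<longleftrightarrow> w (Suc i) < w i"
    using w wi by (auto simp: inv_set_iff perms_iff_permutes permutes_inverses)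
  fix p q
  show "(p,q) \<in> inv_set n (w \<circ> simple_transp i) \<longleftrightarrow> (p,q) \<in> (if w i < w (Suc i)
    then insert (w i, w (Suc i)) (inv_set n w) else inv_set n w - {(w (Suc i), w i)})"
  proof (cases "1 \<le> p \<and> p < q \<and> q \<le> n")
    case True
    then show ?thesis
      using inv_set_comp_simple_transp_iff[OF w i, of p q] wi w_inv by (auto simp: doubleton_eq_iff)
  next
    case False
    then show ?thesis
      using inv_set_subset[OF w] inv_set_subset[OF perms_comp_simple_transp[OF w i]] wi
      unfolding inversion_pairs_def by auto
  qed
qed

lemma inv_set_simple_transp: "1 \<le> i \<Longrightarrow> i < n \<Longrightarrow> inv_set n (simple_transp i) = {(i, Suc i)}"
proof -
  assume "1 \<le> i" "i < n"
  moreover have "inv_set n id = {}" unfolding inv_set_def by auto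
  ultimately show ?thesis using inv_set_comp_simple_transp[OF id_in_perms] by simp
qed

section \<open>The weak order as a lattice\<close>

lemma trancl_subset_trans: "trans S \<Longrightarrow> R \<subseteq> S \<Longrightarrow> R\<^sup>+ \<subseteq> S"
  by (metis trancl_id trancl_mono subsetI)

lemma trans_inversion_pairs: "trans (inversion_pairs n)"
  unfolding trans_def inversion_pairs_def by auto

lemma coclosed_Un: "coclosed X \<Longrightarrow> coclosed Z \<Longrightarrow> coclosed (X \<union> Z)"
  unfolding coclosed_def by blast

lemma coclosed_trancl:
  assumes sub: "R \<subseteq> inversion_pairs n" and co: "coclosed R"
  shows "coclosed (R\<^sup>+)"
  unfolding coclosed_def
proof (intro allI impI)
  fix p q r assume "(p,r) \<in> R\<^sup>+" "p < q" "q < r"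
  then show "(p,q) \<in> R\<^sup>+ \<or> (q,r) \<in> R\<^sup>+"
  proof (induction r arbitrary: q rule: trancl_induct)
    case (base y)
    then show ?case using coclosedD[OF co] by blast
  next
    case (step y z)
    show ?case
    proof (cases q y rule: linorder_cases)
      case less
      then show ?thesis using step by (meson trancl.trancl_into_trancl)
    next
      case greater
      have "y < z" using step(2) sub unfolding inversion_pairs_def by auto
      then have "(y,q) \<in> R \<or> (q,z) \<in> R" using coclosedD[OF co step(2)] greater step(5) by blast
      then show ?thesis using step(1) by (meson r_into_trancl trancl.trancl_into_trancl)
    qed (use step(1) in simp)
  qed
qed

lemma biclosed_trancl: "R \<subseteq> inversion_pairs n \<Longrightarrow> coclosed R \<Longrightarrow> biclosed n (R\<^sup>+)"
  unfolding biclosed_def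
  by (simp add: coclosed_trancl trancl_subset_trans trans_inversion_pairs)

lemma biclosed_Diff:
  assumes X: "biclosed n X" shows "biclosed n (inversion_pairs n - X)"
proof -
  have "(p,r) \<in> inversion_pairs n - X"
    if "(p,q) \<in> inversion_pairs n - X" "(q,r) \<in> inversion_pairs n - X" for p q r
    using that biclosedD(3)[OF X, of p r q] by (auto simp: inversion_pairs_def)
  moreover have "(p,q) \<in> inversion_pairs n - X \<or> (q,r) \<in> inversion_pairs n - X"
    if "(p,r) \<in> inversion_pairs n - X" "p < q" "q < r" for p q r
    using that biclosedD(2)[OF X, of p q r] by (auto simp: inversion_pairs_def)
  ultimately show ?thesis unfolding biclosed_def coclosed_def trans_def by blast
qed

lemma biclosed_join:
  "x \<in> perms n \<Longrightarrow> z \<in> perms n \<Longrightarrow> biclosed n ((inv_set n x \<union> inv_set n z)\<^sup>+)"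
  by (metis biclosed_def biclosed_trancl coclosed_Un inv_set_biclosed le_sup_iff)

lemma biclosed_meet:
  assumes "x \<in> perms n" "z \<in> perms n"
  shows "biclosed n (inversion_pairs n -
    ((inversion_pairs n - inv_set n x) \<union> (inversion_pairs n - inv_set n z))\<^sup>+)"
proof -
  have "biclosed n (inversion_pairs n - inv_set n w)" if "w \<in> perms n" for w
    using biclosed_Diff[OF inv_set_biclosed[OF that]] .
  then show ?thesis using assms
    by (intro biclosed_Diff biclosed_trancl) (auto simp: biclosed_def coclosed_Un)
qed

lemma is_join_iff:
  assumes x: "x \<in> perms n" and z: "z \<in> perms n"
  shows "is_join n x z j \<longleftrightarrow> j \<in> perms n \<and> inv_set n j = (inv_set n x \<union> inv_set n z)\<^sup>+"
proof -
  let ?S = "(inv_set n x \<union> inv_set n z)\<^sup>+"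
  obtain j0 where j0: "j0 \<in> perms n" "inv_set n j0 = ?S"
    using biclosed_realizable[OF biclosed_join[OF x z]] by blast
  have least: "?S \<subseteq> inv_set n u"
    if "u \<in> perms n" "inv_set n x \<subseteq> inv_set n u" "inv_set n z \<subseteq> inv_set n u" for u
    using that inv_set_biclosed[OF that(1)] by (intro trancl_subset_trans) (auto simp: biclosed_def)
  show ?thesis
  proof
    assume J: "is_join n x z j"
    moreover have "inv_set n x \<subseteq> inv_set n j0" "inv_set n z \<subseteq> inv_set n j0"
      using j0(2) by auto
    ultimately have "inv_set n j \<subseteq> inv_set n j0"
      using j0(1) unfolding is_join_def weak_le_def by blast
    moreover have "?S \<subseteq> inv_set n j"
      using J least unfolding is_join_def weak_le_def by auto
    ultimately show "j \<in> perms n \<and> inv_set n j = ?S"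
      using J j0 unfolding is_join_def by auto
  next
    assume "j \<in> perms n \<and> inv_set n j = ?S"
    then show "is_join n x z j" unfolding is_join_def weak_le_def using least by auto
  qed
qed

lemma is_meet_iff:
  assumes x: "x \<in> perms n" and z: "z \<in> perms n"
  shows "is_meet n x z j \<longleftrightarrow> j \<in> perms n \<and>
     inv_set n j = inversion_pairs n -
       ((inversion_pairs n - inv_set n x) \<union> (inversion_pairs n - inv_set n z))\<^sup>+"
proof -
  let ?C = "\<lambda>w. inversion_pairs n - inv_set n w"
  let ?S = "inversion_pairs n - (?C x \<union> ?C z)\<^sup>+"
  obtain j0 where j0: "j0 \<in> perms n" "inv_set n j0 = ?S"
    using biclosed_realizable[OF biclosed_meet[OF x z]] by blast
  have lower: "?S \<subseteq> inv_set n x" "?S \<subseteq> inv_set n z"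
    using inv_set_subset x z by auto
  have greatest: "inv_set n u \<subseteq> ?S"
    if "u \<in> perms n" "inv_set n u \<subseteq> inv_set n x" "inv_set n u \<subseteq> inv_set n z" for u
  proof -
    have "(?C x \<union> ?C z)\<^sup>+ \<subseteq> ?C u"
      using that biclosed_Diff[OF inv_set_biclosed[OF that(1)]]
      by (intro trancl_subset_trans) (auto simp: biclosed_def)
    then show ?thesis using inv_set_subset[OF that(1)] by auto
  qed
  show ?thesis
  proof
    assume J: "is_meet n x z j"
    then have "inv_set n j0 \<subseteq> inv_set n j"
      using j0 lower unfolding is_meet_def weak_le_def by blast
    moreover have "inv_set n j \<subseteq> ?S"
      using J greatest unfolding is_meet_def weak_le_def by auto
    ultimately show "j \<in> perms n \<and> inv_set n j = ?S"
      using J j0 unfolding is_meet_def by auto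
  next
    assume "j \<in> perms n \<and> inv_set n j = ?S"
    then show "is_meet n x z j" unfolding is_meet_def weak_le_def using greatest lower by auto
  qed
qed

lemma join_exists: "x \<in> perms n \<Longrightarrow> z \<in> perms n \<Longrightarrow> \<exists>j. is_join n x z j"
  using biclosed_realizable[OF biclosed_join] is_join_iff by blast

lemma meet_exists: "x \<in> perms n \<Longrightarrow> z \<in> perms n \<Longrightarrow> \<exists>j. is_meet n x z j"
  using biclosed_realizable[OF biclosed_meet] is_meet_iff by blast

lemma is_join_of_le:
  assumes "x \<in> perms n" "z \<in> perms n" "inv_set n x \<subseteq> inv_set n z"
  shows "is_join n x z z" "is_join n z x z"
  using assms unfolding is_join_def weak_le_def by auto

lemma is_meet_of_le:
  assumes "x \<in> perms n" "z \<in> perms n" "inv_set n x \<subseteq> inv_set n z"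
  shows "is_meet n x z x" "is_meet n z x x"
  using assms unfolding is_meet_def weak_le_def by auto

lemma lattice_congruence_join:
  "lattice_congruence n \<Theta> \<Longrightarrow> (x,y) \<in> \<Theta> \<Longrightarrow> z \<in> perms n \<Longrightarrow>
   is_join n x z j \<Longrightarrow> is_join n y z j' \<Longrightarrow> (j,j') \<in> \<Theta>"
  unfolding lattice_congruence_def by blast

lemma lattice_congruence_meet:
  "lattice_congruence n \<Theta> \<Longrightarrow> (x,y) \<in> \<Theta> \<Longrightarrow> z \<in> perms n \<Longrightarrow>
   is_meet n x z j \<Longrightarrow> is_meet n y z j' \<Longrightarrow> (j,j') \<in> \<Theta>"
  unfolding lattice_congruence_def by blast

lemma lattice_congruence_sym: "lattice_congruence n \<Theta> \<Longrightarrow> (x,y) \<in> \<Theta> \<Longrightarrow> (y,x) \<in> \<Theta>"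
  unfolding lattice_congruence_def equiv_def by (meson symD)

lemma covers_of_insert:
  assumes x: "x \<in> perms n" and y: "y \<in> perms n"
    and ins: "inv_set n y = insert e (inv_set n x)" and e: "e \<notin> inv_set n x"
  shows "covers n y x"
proof -
  have "\<not> weak_less n x z \<or> \<not> weak_less n z y" if z: "z \<in> perms n" for z
  proof (cases "e \<in> inv_set n z")
    case True
    then show ?thesis
      using ins inv_set_inj[OF z y] unfolding weak_less_def weak_le_def by auto
  next
    case False
    then show ?thesis
      using ins inv_set_inj[OF x z] unfolding weak_less_def weak_le_def by auto
  qed
  moreover have "x \<noteq> y" using ins e by auto
  ultimately show ?thesis
    using x y ins unfolding covers_def weak_less_def weak_le_def by auto
qed

lemma descent_in_inv_set:
  assumes g: "g \<in> perms n" and j: "1 \<le> j" "j < n" and d: "g (Suc j) < g j"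
  shows "(g (Suc j), g j) \<in> inv_set n g"
proof -
  have "inv g (g j) = j" "inv g (g (Suc j)) = Suc j"
    using g by (simp_all add: perms_iff_permutes permutes_inverses)
  then show ?thesis using g j d perms_in[OF g] by (auto simp: inv_set_iff)
qed

lemma covers_comp_descent:
  assumes g: "g \<in> perms n" and j: "1 \<le> j" "j < n" and d: "g (Suc j) < g j"
  shows "covers n g (g \<circ> simple_transp j)"
  using covers_of_insert[OF perms_comp_simple_transp[OF g j] g] descent_in_inv_set[OF g j d]
    inv_set_comp_simple_transp[OF g j] d by auto

text \<open>If \<open>s \<le> t\<close> and \<open>s \<noteq> t\<close>, some ascent of \<open>s\<close> is inverted in \<open>t\<close>: take a pair inverted in
  \<open>t\<close> but not in \<open>s\<close> whose entries are closest in the one-line notation of \<open>s\<close>. If they were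
  not adjacent, the entry between them would, by biclosedness, give a closer such pair.\<close>

lemma exists_closer_inverted_pair:
  assumes s: "s \<in> perms n" and t: "t \<in> perms n" and sub: "inv_set n s \<subseteq> inv_set n t"
    and pq: "(p,q) \<in> inv_set n t - inv_set n s"
    and r: "r \<in> {1..n}" "inv s p < inv s r" "inv s r < inv s q"
  shows "\<exists>x y. (x,y) \<in> inv_set n t - inv_set n s \<and> inv s y - inv s x < inv s q - inv s p"
proof -
  have in_s: "(x,y) \<in> inv_set n s \<longleftrightarrow> inv s y < inv s x"
    if "x \<in> {1..n}" "y \<in> {1..n}" "x < y" for x y
    using that s by (auto simp: inv_set_iff)
  have pq': "p \<in> {1..n}" "q \<in> {1..n}" "p < q"
    using pq inv_set_subset[OF t] unfolding inversion_pairs_def by auto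
  note T = biclosedD[OF inv_set_biclosed[OF t]]
  have gaps: "inv s r - inv s p < inv s q - inv s p" "inv s q - inv s r < inv s q - inv s p"
    using r by auto
  consider "p < r" "r < q" | "r < p" | "q < r"
    using r pq' by (metis linorder_neqE_nat less_irrefl)
  then show ?thesis
  proof cases
    case 1
    then have "(p,r) \<notin> inv_set n s" "(r,q) \<notin> inv_set n s" using in_s pq' r by auto
    then show ?thesis using T(3)[OF _ 1] pq gaps by blast
  next
    case 2
    then have "(r,p) \<in> inv_set n t" using in_s[of r p] sub r pq' by auto
    then have "(r,q) \<in> inv_set n t" using T(2) pq by blast
    moreover have "(r,q) \<notin> inv_set n s" using in_s[of r q] r pq' 2 by auto
    ultimately show ?thesis using gaps by blast
  next
    case 3
    then have "(q,r) \<in> inv_set n t" using in_s[of q r] sub r pq' by auto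
    then have "(p,r) \<in> inv_set n t" using T(2) pq by blast
    moreover have "(p,r) \<notin> inv_set n s" using in_s[of p r] r pq' 3 by auto
    ultimately show ?thesis using gaps by blast
  qed
qed

lemma exists_ascent_inverted:
  assumes s: "s \<in> perms n" and t: "t \<in> perms n" and sub: "inv_set n s \<subseteq> inv_set n t"
    and ne: "inv_set n s \<noteq> inv_set n t"
  shows "\<exists>i. 1 \<le> i \<and> i < n \<and> s i < s (Suc i) \<and> (s i, s (Suc i)) \<in> inv_set n t"
proof -
  let ?P = "inv s" and ?D = "inv_set n t - inv_set n s"
  define gap where "gap e = ?P (snd e) - ?P (fst e)" for e
  have S: "s permutes {1..n}" using s by (simp add: perms_iff_permutes)
  have ordered: "x \<in> {1..n} \<and> y \<in> {1..n} \<and> x < y \<and> ?P x < ?P y" if "(x,y) \<in> ?D" for x y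
  proof -
    have "x \<in> {1..n}" "y \<in> {1..n}" "x < y"
      using that inv_set_subset[OF t] unfolding inversion_pairs_def by auto
    moreover have "?P x \<noteq> ?P y" using S \<open>x < y\<close> by (metis less_irrefl permutes_inverses(1))
    ultimately show ?thesis using that s by (auto simp: inv_set_iff)
  qed
  obtain e where "e \<in> ?D" using ne sub by blast
  then obtain e' where e': "e' \<in> ?D" and least: "\<And>d. d \<in> ?D \<Longrightarrow> gap e' \<le> gap d"
    using ex_has_least_nat[of "\<lambda>e. e \<in> ?D" e gap] by blast
  obtain p q where e'_def: "e' = (p,q)" by fastforce
  have pq: "(p,q) \<in> ?D" using e' e'_def by simp
  have pq': "p \<in> {1..n}" "q \<in> {1..n}" "p < q" "?P p < ?P q" using ordered[OF pq] by auto
  have P_range: "?P p \<in> {1..n}" "?P q \<in> {1..n}"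
    using pq'(1,2) permutes_inv[OF S] by (metis permutes_in_image)+
  have adjacent: "?P q = Suc (?P p)"
  proof (rule ccontr)
    assume "?P q \<noteq> Suc (?P p)"
    then have "Suc (?P p) < ?P q" using pq' by simp
    moreover have "Suc (?P p) \<in> {1..n}" using P_range \<open>Suc (?P p) < ?P q\<close> by auto
    then have "s (Suc (?P p)) \<in> {1..n}" "?P (s (Suc (?P p))) = Suc (?P p)"
      using S by (metis permutes_in_image, metis permutes_inverses(2))
    ultimately obtain x y where "(x,y) \<in> ?D" "?P y - ?P x < ?P q - ?P p"
      using exists_closer_inverted_pair[OF s t sub pq, of "s (Suc (?P p))"] by auto
    then show False using least[of "(x,y)"] unfolding gap_def e'_def by simp
  qed
  have "s (?P p) = p" "s (Suc (?P p)) = q"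
    using S adjacent by (metis permutes_inverses(1))+
  then show ?thesis
    using pq pq' P_range adjacent by (intro exI[of _ "?P p"]) auto
qed

section \<open>Arcs and join-irreducibles\<close>

definition arc :: "nat \<Rightarrow> nat \<Rightarrow> nat \<Rightarrow> nat set \<Rightarrow> nat set" where
  "arc n a c S = {a} \<union> (S \<inter> {a<..<c}) \<union> {c<..n}"

definition cut_inversions :: "nat \<Rightarrow> nat set \<Rightarrow> (nat \<times> nat) set" where
  "cut_inversions n A = {(p,q). 1 \<le> p \<and> p < q \<and> q \<le> n \<and> p \<in> A \<and> q \<notin> A}"

lemma arc_cong: "(\<And>d. a < d \<Longrightarrow> d < c \<Longrightarrow> d \<in> S \<longleftrightarrow> d \<in> S') \<Longrightarrow> arc n a c S = arc n a c S'"
  unfolding arc_def by auto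

lemma cut_inversions_arcD:
  assumes "(p,q) \<in> cut_inversions n (arc n a c S)" "a < c"
  shows "1 \<le> p" "p < q" "q \<le> n" "p = a \<or> (p \<in> S \<and> a < p \<and> p < c)"
    "q = c \<or> (q \<notin> S \<and> a < q \<and> q < c)"
  using assms unfolding cut_inversions_def arc_def by auto

lemma cut_inversions_arc_mem: "1 \<le> a \<Longrightarrow> a < c \<Longrightarrow> c \<le> n \<Longrightarrow> (a,c) \<in> cut_inversions n (arc n a c S)"
  unfolding cut_inversions_def arc_def by auto

lemma arc_subset: "arc n m M S \<subseteq> {1..n}" if "1 \<le> m" "m < M" "M \<le> n"
  using that unfolding arc_def by auto

lemma perms_of_list:
  assumes d: "distinct xs" and s: "set xs = {1..n}"
  shows "(\<lambda>i. if i \<in> {1..n} then xs ! (i - 1) else i) \<in> perms n"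
proof -
  let ?w = "\<lambda>i. if i \<in> {1..n} then xs ! (i - 1) else i"
  have len: "length xs = n" using d s distinct_card by fastforce
  have "inj_on ?w {1..n}"
  proof (rule inj_onI)
    fix i j assume "i \<in> {1..n}" "j \<in> {1..n}" "?w i = ?w j"
    then have "i - 1 = j - 1" using d len nth_eq_iff_index_eq[of xs "i - 1" "j - 1"] by auto
    then show "i = j" using \<open>i \<in> {1..n}\<close> \<open>j \<in> {1..n}\<close> by auto
  qed
  moreover have "?w ` {1..n} = {1..n}"
  proof (intro equalityI subsetI)
    fix y assume "y \<in> ?w ` {1..n}"
    then obtain i where "i \<in> {1..n}" "y = xs ! (i - 1)" by auto
    then show "y \<in> {1..n}" using len s nth_mem[of "i - 1" xs] by auto
  next
    fix v assume "v \<in> {1..n}"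
    then obtain k where "k < length xs" "xs ! k = v" using s by (metis in_set_conv_nth)
    then show "v \<in> ?w ` {1..n}" using len by (intro image_eqI[of _ _ "Suc k"]) auto
  qed
  ultimately show ?thesis unfolding perms_def by (auto simp: bij_betw_def)
qed

lemma inv_set_two_runs:
  assumes sx: "sorted_wrt (<) xs" and sy: "sorted_wrt (<) ys" and d: "distinct (xs @ ys)"
    and s: "set (xs @ ys) = {1..n}"
  defines "w \<equiv> (\<lambda>i. if i \<in> {1..n} then (xs @ ys) ! (i - 1) else i)"
  shows "inv_set n w = {(p,q). p \<in> set ys \<and> q \<in> set xs \<and> p < q}"
proof (intro set_eqI iffI; clarify)
  have len: "length (xs @ ys) = n" using distinct_card[OF d] s by simp
  fix p q
  {
    assume "(p,q) \<in> inv_set n w"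
    then obtain i j where ij: "p = w j" "q = w i" "1 \<le> i" "i < j" "j \<le> n" "w j < w i"
      unfolding inv_set_def by blast
    let ?k = "j - 1 - length xs"
    have ij': "i - 1 < j - 1" "j - 1 < length (xs @ ys)" using ij len by auto
    have straddle: "i - 1 < length xs" "length xs \<le> j - 1"
    proof -
      have "\<not> (i - 1 < length xs \<and> j - 1 < length xs)"
        using ij ij' sorted_wrt_nth_less[OF sx, of "i - 1" "j - 1"] unfolding w_def by (auto simp: nth_append)
      moreover have "\<not> (length xs \<le> i - 1)"
      proof
        assume c: "length xs \<le> i - 1"
        then have "i - 1 - length xs < ?k" "?k < length ys" using ij' by auto
        then have "ys ! (i - 1 - length xs) < ys ! ?k" using sorted_wrt_nth_less[OF sy] by blast
        moreover have "w i = ys ! (i - 1 - length xs)" "w j = ys ! ?k"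
          using ij ij' c unfolding w_def by (auto simp: nth_append)
        ultimately show False using ij(6) by simp
      qed
      ultimately show "i - 1 < length xs" "length xs \<le> j - 1" by auto
    qed
    then have "q = xs ! (i - 1)" "p = ys ! ?k" "?k < length ys"
      using ij len unfolding w_def by (auto simp: nth_append)
    then show "p \<in> set ys \<and> q \<in> set xs \<and> p < q" using ij straddle by auto
  next
    assume pq: "p \<in> set ys" "q \<in> set xs" "p < q"
    obtain k where k: "k < length xs" "xs ! k = q" using pq(2) by (metis in_set_conv_nth)
    obtain l where l: "l < length ys" "ys ! l = p" using pq(1) by (metis in_set_conv_nth)
    have "w (Suc k) = q" "w (Suc (length xs + l)) = p"
      using k l len unfolding w_def by (auto simp: nth_append)
    then show "(p,q) \<in> inv_set n w" unfolding inv_set_def using pq(3) k l len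
      by (intro CollectI exI[of _ "Suc k"] exI[of _ "Suc (length xs + l)"]) auto
  }
qed

lemma sorted_list_of_set_nth_greatest:
  assumes "finite X" "x \<in> X" "\<And>y. y \<in> X \<Longrightarrow> y \<le> x"
  shows "sorted_list_of_set X ! (card X - 1) = x"
proof -
  let ?xs = "sorted_list_of_set X"
  have xs: "sorted_wrt (<) ?xs" "set ?xs = X" "length ?xs = card X"
    using assms(1) by (simp_all add: strict_sorted_list_of_set)
  obtain j where j: "j < card X" "?xs ! j = x" using assms(2) xs by (metis in_set_conv_nth)
  have "?xs ! (card X - 1) \<in> X" using j xs by (metis diff_less less_nat_zero_code nth_mem zero_less_one not_gr0)
  then have "?xs ! (card X - 1) \<le> x" using assms(3) by blast
  moreover have "x \<le> ?xs ! (card X - 1)"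
  proof (cases "j = card X - 1")
    case False
    then have "j < card X - 1" using j by simp
    then show ?thesis using sorted_wrt_nth_less[OF xs(1), of j "card X - 1"] j xs(3) by simp
  qed (use j in simp)
  ultimately show ?thesis by simp
qed

lemma sorted_list_of_set_nth_least:
  assumes "finite X" "x \<in> X" "\<And>y. y \<in> X \<Longrightarrow> x \<le> y"
  shows "sorted_list_of_set X ! 0 = x"
proof -
  have "X \<noteq> {}" using assms(2) by blast
  then have "sorted_list_of_set X ! 0 = Min X" using assms(1) by (simp add: sorted_list_of_set_nonempty)
  also have "\<dots> = x" using assms by (intro Min_eqI) auto
  finally show ?thesis .
qed

lemma gamma_of_perm_inv_set:
  assumes "A \<subseteq> {1..n}"
  shows "gamma_of n A \<in> perms n" "inv_set n (gamma_of n A) = cut_inversions n A"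
proof -
  let ?xs = "sorted_list_of_set ({1..n} - A)" and ?ys = "sorted_list_of_set A"
  have fin: "finite A" using assms finite_subset by blast
  have sorted: "sorted_wrt (<) ?xs" "sorted_wrt (<) ?ys" "set ?xs = {1..n} - A" "set ?ys = A"
    using fin by (simp_all add: strict_sorted_list_of_set)
  have dist: "distinct (?xs @ ?ys)" "set (?xs @ ?ys) = {1..n}"
    using sorted assms strict_sorted_iff by (auto simp: distinct_append)
  show "gamma_of n A \<in> perms n" unfolding gamma_of_def by (rule perms_of_list[OF dist])
  show "inv_set n (gamma_of n A) = cut_inversions n A"
    unfolding gamma_of_def inv_set_two_runs[OF sorted(1,2) dist] sorted(3,4) cut_inversions_def
    using assms by auto
qed

text \<open>The descent of \<open>gamma_of n (arc n m M S)\<close> sits between the last entry \<open>M\<close> of the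
  complement and the first entry \<open>m\<close> of the arc.\<close>

lemma gamma_of_arc_descent:
  fixes S :: "nat set"
  assumes mM: "1 \<le> m" "m < M" "M \<le> n"
  defines "k \<equiv> card ({1..n} - arc n m M S)"
  shows "1 \<le> k" "k < n" "gamma_of n (arc n m M S) k = M" "gamma_of n (arc n m M S) (Suc k) = m"
proof -
  let ?A = "arc n m M S"
  let ?xs = "sorted_list_of_set ({1..n} - ?A)" and ?ys = "sorted_list_of_set ?A"
  have A: "m \<in> ?A" "M \<in> {1..n} - ?A" "\<And>v. v \<in> ?A \<Longrightarrow> m \<le> v" "\<And>v. v \<in> {1..n} - ?A \<Longrightarrow> v \<le> M"
    using mM unfolding arc_def by auto
  have fin: "finite ?A" using arc_subset[OF mM] finite_subset by blast
  have "card ({1..n} - ?A) + card ?A = n"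
    using arc_subset[OF mM] card_mono[OF _ arc_subset[OF mM]] by (simp add: card_Diff_subset fin)
  moreover have "0 < card ({1..n} - ?A)" "0 < card ?A" using A fin by (auto simp: card_gt_0_iff)
  ultimately show k: "1 \<le> k" "k < n" unfolding k_def by linarith+
  have "?xs ! (k - 1) = M" unfolding k_def by (rule sorted_list_of_set_nth_greatest) (use A in auto)
  then show "gamma_of n ?A k = M"
    unfolding gamma_of_def using k by (auto simp: nth_append k_def)
  have "?ys ! 0 = m" by (rule sorted_list_of_set_nth_least) (use A fin in auto)
  then show "gamma_of n ?A (Suc k) = m"
    unfolding gamma_of_def using k by (auto simp: nth_append k_def)
qed

lemma cut_inversions_arc_least:
  assumes mM: "1 \<le> m" "m < M" "M \<le> n" and X: "biclosed n X"
    and sub: "X \<subseteq> cut_inversions n (arc n m M S)" and mMX: "(m,M) \<in> X"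
  shows "cut_inversions n (arc n m M S) \<subseteq> X"
proof (clarify)
  let ?A = "arc n m M S"
  have A: "\<And>v. v \<in> ?A \<Longrightarrow> m \<le> v" "\<And>v. v \<le> n \<Longrightarrow> v \<notin> ?A \<Longrightarrow> v \<le> M"
    using mM unfolding arc_def by auto
  note co = biclosedD(3)[OF X]
  fix p q assume "(p,q) \<in> cut_inversions n ?A"
  then have h: "p < q" "q \<le> n" "p \<in> ?A" "q \<notin> ?A" unfolding cut_inversions_def by auto
  have qM: "q \<le> M" using A(2)[OF h(2,4)] .
  have pM: "(p,M) \<in> X"
  proof (cases "p = m")
    case False
    then have "m < p" using A(1)[OF h(3)] by simp
    then have "(m,p) \<in> X \<or> (p,M) \<in> X" using co[OF mMX] h(1) qM by simp
    moreover have "(m,p) \<notin> X" using sub h(3) unfolding cut_inversions_def by auto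
    ultimately show ?thesis by auto
  qed (use mMX in simp)
  show "(p,q) \<in> X"
  proof (cases "q = M")
    case False
    then have "(p,q) \<in> X \<or> (q,M) \<in> X" using co[OF pM] h(1) qM by simp
    moreover have "(q,M) \<notin> X" using sub h(4) unfolding cut_inversions_def by auto
    ultimately show ?thesis by auto
  qed (use pM in simp)
qed

text \<open>Every biclosed subset of the cut containing \<open>(m,M)\<close> is the whole cut, so the only
  lower cover drops the inversion \<open>(m,M)\<close>.\<close>

lemma join_irreducible_of_cut_inversions:
  assumes mM: "1 \<le> m" "m < M" "M \<le> n" and g: "g \<in> perms n"
    and Ig: "inv_set n g = cut_inversions n (arc n m M S)"
    and k: "1 \<le> k" "k < n" "g k = M" "g (Suc k) = m"
  shows "join_irreducible n g" "lower_cover n g = g \<circ> simple_transp k"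
proof -
  let ?g' = "g \<circ> simple_transp k"
  have d: "g (Suc k) < g k" using k mM by simp
  have cover: "covers n g ?g'" by (rule covers_comp_descent[OF g k(1,2) d])
  have Ig': "inv_set n ?g' = inv_set n g - {(m,M)}"
    using inv_set_comp_simple_transp[OF g k(1,2)] d k by simp
  have unique: "x = ?g'" if c: "covers n g x" for x
  proof -
    have x: "x \<in> perms n" "inv_set n x \<subseteq> inv_set n g" "x \<noteq> g"
      using c unfolding covers_def weak_less_def weak_le_def by auto
    have "(m,M) \<notin> inv_set n x"
    proof
      assume "(m,M) \<in> inv_set n x"
      then have "inv_set n g \<subseteq> inv_set n x"
        using cut_inversions_arc_least[OF mM inv_set_biclosed[OF x(1)]] x(2) Ig by blast
      then show False using x inv_set_inj[OF x(1) g] by blast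
    qed
    then have "weak_le n x ?g'" using x(2) Ig' unfolding weak_le_def by auto
    moreover have "weak_less n ?g' g" using cover unfolding covers_def by auto
    ultimately show "x = ?g'" using c perms_comp_simple_transp[OF g k(1,2)]
      unfolding covers_def weak_less_def by blast
  qed
  then have "\<exists>!x. covers n g x" using cover by blast
  then show "join_irreducible n g" using g unfolding join_irreducible_def by blast
  show "lower_cover n g = ?g'" unfolding lower_cover_def using cover unique by (rule the_equality)
qed

lemma conj_simple_transp:
  assumes g: "g \<in> perms n"
  shows "g \<circ> simple_transp k \<circ> inv g = transpose (g k) (g (Suc k))"
proof -
  have P: "g permutes {1..n}" using g by (simp add: perms_iff_permutes)
  have "transpose (g k) (g (Suc k)) \<circ> g = g \<circ> transpose (inv g (g k)) (inv g (g (Suc k)))"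
    using transpose_comp_eq[OF permutes_bij[OF P]] by blast
  also have "\<dots> = g \<circ> simple_transp k" using P by (simp add: permutes_inverses simple_transp_def)
  finally show ?thesis using permutes_inv_o(1)[OF P] by (metis comp_assoc comp_id)
qed

lemma transpose_eq_imp_doubleton_eq:
  assumes "a \<noteq> b" and "transpose a b = transpose c d"
  shows "{a,b} = {c,d}"
  using assms by (metis insert_commute transpose_apply_first transpose_apply_other transpose_apply_second)

lemma has_left_reflection_iff:
  assumes g: "g \<in> perms n" and mM: "m < M"
  shows "has_left_reflection n g (transpose m M) \<longleftrightarrow> (\<exists>i. 1 \<le> i \<and> i < n \<and> g i = M \<and> g (Suc i) = m)"
proof
  assume "has_left_reflection n g (transpose m M)"
  then obtain i where i: "1 \<le> i" "i < n" "g (Suc i) < g i" "transpose m M = transpose (g i) (g (Suc i))"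
    unfolding has_left_reflection_def conj_simple_transp[OF g] by blast
  then have "{m,M} = {g i, g (Suc i)}" using transpose_eq_imp_doubleton_eq[OF less_imp_neq[OF mM]] by simp
  then show "\<exists>i. 1 \<le> i \<and> i < n \<and> g i = M \<and> g (Suc i) = m"
    using i mM by (auto simp: doubleton_eq_iff)
next
  assume "\<exists>i. 1 \<le> i \<and> i < n \<and> g i = M \<and> g (Suc i) = m"
  then show "has_left_reflection n g (transpose m M)"
    unfolding has_left_reflection_def conj_simple_transp[OF g] using mM
    by (auto simp: transpose_commute)
qed

lemma join_irreducible_descent_unique:
  assumes ji: "join_irreducible n g"
    and i: "1 \<le> i" "i < n" "g (Suc i) < g i" and j: "1 \<le> j" "j < n" "g (Suc j) < g j"
  shows "i = j"
proof -
  have g: "g \<in> perms n" using ji unfolding join_irreducible_def by blast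
  have "covers n g (g \<circ> simple_transp i)" "covers n g (g \<circ> simple_transp j)"
    using covers_comp_descent[OF g] i j by blast+
  then have "g \<circ> simple_transp i = g \<circ> simple_transp j" using ji unfolding join_irreducible_def by blast
  moreover have "inv_set n (g \<circ> simple_transp i) = inv_set n g - {(g (Suc i), g i)}"
    "inv_set n (g \<circ> simple_transp j) = inv_set n g - {(g (Suc j), g j)}"
    using inv_set_comp_simple_transp[OF g] i j by auto
  ultimately have "inv_set n g - {(g (Suc i), g i)} = inv_set n g - {(g (Suc j), g j)}" by simp
  then have "(g (Suc i), g i) = (g (Suc j), g j)"
    using descent_in_inv_set[OF g] i j by blast
  then show ?thesis using perms_inj[OF g] by blast
qed

lemma single_descent_increasing:
  fixes g :: "nat \<Rightarrow> 'a::order"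
  assumes i: "i < n" and asc: "\<And>j. 1 \<le> j \<Longrightarrow> j < n \<Longrightarrow> j \<noteq> i \<Longrightarrow> g j < g (Suc j)"
    and xy: "x < y" "1 \<le> x \<and> y \<le> i \<or> Suc i \<le> x \<and> y \<le> n"
  shows "g x < g y"
proof (rule lift_Suc_mono_less_ivl[of "{1..<n} - {i}" g, OF _ xy(1)])
  show "g k < g (Suc k)" if "k \<in> {1..<n} - {i}" for k using that asc by auto
  show "{x..<y} \<subseteq> {1..<n} - {i}" using xy i by auto
qed

lemma permutes_image_atLeastAtMost_iff:
  assumes "g permutes {1..n}"
  shows "v \<in> g ` {Suc i..n} \<longleftrightarrow> v \<in> {1..n} \<and> i < inv g v"
proof
  assume "v \<in> g ` {Suc i..n}"
  then obtain t where "t \<in> {Suc i..n}" "v = g t" by auto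
  then show "v \<in> {1..n} \<and> i < inv g v"
    using permutes_in_image[OF assms, of t] permutes_inverses(2)[OF assms] by auto
next
  assume v: "v \<in> {1..n} \<and> i < inv g v"
  then have "inv g v \<in> {Suc i..n}" "g (inv g v) = v"
    using permutes_in_image[OF permutes_inv[OF assms]] permutes_inverses(1)[OF assms] by auto
  then show "v \<in> g ` {Suc i..n}" by (metis image_eqI)
qed

lemma single_descent_cut_inversions:
  assumes g: "g \<in> perms n" and i: "i < n"
    and asc: "\<And>j. 1 \<le> j \<Longrightarrow> j < n \<Longrightarrow> j \<noteq> i \<Longrightarrow> g j < g (Suc j)"
  shows "inv_set n g = cut_inversions n (g ` {Suc i..n})"
proof -
  have P: "g permutes {1..n}" using g by (simp add: perms_iff_permutes)
  have cut: "inv g q < inv g p \<longleftrightarrow> i < inv g p \<and> inv g q \<le> i"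
    if pq: "p \<in> {1..n}" "q \<in> {1..n}" "p < q" for p q
  proof -
    let ?x = "inv g p" and ?y = "inv g q"
    have xy: "?x \<in> {1..n}" "?y \<in> {1..n}" "g ?x = p" "g ?y = q"
      using pq permutes_in_image[OF permutes_inv[OF P]] permutes_inverses(1)[OF P] by blast+
    have "\<not> ?y < ?x" if "?x \<le> i \<and> ?y \<le> i \<or> i < ?x \<and> i < ?y"
      using that single_descent_increasing[where g = g, OF i asc, of ?y ?x] xy pq(3) by auto
    moreover have "?x \<noteq> ?y" using xy pq(3) by auto
    ultimately show ?thesis by (cases "?x \<le> i"; cases "?y \<le> i") auto
  qed
  show ?thesis
    unfolding cut_inversions_def using cut permutes_image_atLeastAtMost_iff[OF P]
    by (auto simp: inv_set_iff[OF g])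
qed

lemma single_descent_image_arc:
  assumes g: "g \<in> perms n" and i: "1 \<le> i" "i < n"
    and asc: "\<And>j. 1 \<le> j \<Longrightarrow> j < n \<Longrightarrow> j \<noteq> i \<Longrightarrow> g j < g (Suc j)"
  defines "A \<equiv> g ` {Suc i..n}"
  shows "A = arc n (g (Suc i)) (g i) A"
proof -
  have P: "g permutes {1..n}" using g by (simp add: perms_iff_permutes)
  note A_iff = permutes_image_atLeastAtMost_iff[OF P, of _ i, folded A_def]
  note incr = single_descent_increasing[where g = g, OF i(2) asc]
  have P_in: "inv g v \<in> {1..n}" "g (inv g v) = v" if "v \<in> {1..n}" for v
    using that permutes_in_image[OF permutes_inv[OF P]] permutes_inverses(1)[OF P] by blast+
  have inv_at_i: "inv g (g i) = i" "inv g (g (Suc i)) = Suc i"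
    using P by (simp_all add: permutes_inverses)
  have above_min: "g (Suc i) \<le> v" if "v \<in> A" for v
  proof -
    have "v \<in> {1..n}" "i < inv g v" using that A_iff by auto
    moreover have "g (inv g v) = v" "inv g v \<le> n" using P_in \<open>v \<in> {1..n}\<close> by auto
    ultimately show ?thesis using incr[of "Suc i" "inv g v"] by (cases "inv g v = Suc i") auto
  qed
  have below_max: "v \<le> g i" if "v \<in> {1..n}" "inv g v \<le> i" for v
    using that incr[of "inv g v" i] P_in by (cases "inv g v = i") auto
  show ?thesis
  proof (intro equalityI subsetI)
    fix v assume v: "v \<in> A"
    then have "g (Suc i) \<le> v" "v \<noteq> g i" "v \<le> n" using above_min A_iff inv_at_i by auto
    then show "v \<in> arc n (g (Suc i)) (g i) A" unfolding arc_def using v by auto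
  next
    have "g (Suc i) \<in> A" using A_iff inv_at_i perms_in[OF g] i by auto
    moreover have "v \<in> A" if "g i < v" "v \<le> n" for v
    proof -
      have "v \<in> {1..n}" using that by auto
      moreover from this have "i < inv g v" using below_max[of v] that(1) by fastforce
      ultimately show ?thesis using A_iff by blast
    qed
    ultimately show "v \<in> A" if "v \<in> arc n (g (Suc i)) (g i) A" for v
      using that unfolding arc_def by auto
  qed
qed

lemma join_irreducible_reflection_eq_gamma:
  assumes mM: "1 \<le> m" "m < M" "M \<le> n"
    and ji: "join_irreducible n g" and refl: "has_left_reflection n g (transpose m M)"
  obtains S where "g = gamma_of n (arc n m M S)"
proof -
  have g: "g \<in> perms n" using ji unfolding join_irreducible_def by blast
  obtain i where i: "1 \<le> i" "i < n" "g i = M" "g (Suc i) = m"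
    using refl has_left_reflection_iff[OF g mM(2)] by blast
  have desc: "g (Suc i) < g i" using i mM by simp
  have asc: "g j < g (Suc j)" if "1 \<le> j" "j < n" "j \<noteq> i" for j
  proof (rule ccontr)
    assume "\<not> g j < g (Suc j)"
    moreover have "g j \<noteq> g (Suc j)" using perms_inj[OF g, of j "Suc j"] by auto
    ultimately have "g (Suc j) < g j" by simp
    then show False using join_irreducible_descent_unique[OF ji i(1,2) desc that(1,2)] that(3) by simp
  qed
  define A where "A = g ` {Suc i..n}"
  note D = single_descent_cut_inversions[OF g i(2) asc, folded A_def]
    single_descent_image_arc[OF g i(1,2) asc, folded A_def, unfolded i(3,4)]
  have "inv_set n (gamma_of n (arc n m M A)) = cut_inversions n (arc n m M A)"
    by (rule gamma_of_perm_inv_set(2)[OF arc_subset[OF mM]])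
  also have "\<dots> = inv_set n g"
    using arg_cong[OF D(2)[symmetric], of "cut_inversions n"] D(1) by simp
  finally have "g = gamma_of n (arc n m M A)"
    using inv_set_inj[OF g gamma_of_perm_inv_set(1)[OF arc_subset[OF mM]]] by simp
  then show ?thesis by (rule that)
qed

lemma gamma_of_arc_join_irreducible:
  fixes S :: "nat set"
  assumes mM: "1 \<le> m" "m < M" "M \<le> n"
  defines "\<gamma> \<equiv> gamma_of n (arc n m M S)"
  shows "join_irreducible n \<gamma>" "has_left_reflection n \<gamma> (transpose m M)"
    "lower_cover n \<gamma> \<in> perms n"
    "inv_set n (lower_cover n \<gamma>) = cut_inversions n (arc n m M S) - {(m,M)}"
proof -
  define k where "k = card ({1..n} - arc n m M S)"
  note gamma = gamma_of_perm_inv_set[OF arc_subset[OF mM], of S, folded \<gamma>_def]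
  note k = gamma_of_arc_descent[OF mM, of S, folded \<gamma>_def k_def]
  note J = join_irreducible_of_cut_inversions[OF mM gamma k]
  show "join_irreducible n \<gamma>" by (rule J(1))
  show "has_left_reflection n \<gamma> (transpose m M)"
    using has_left_reflection_iff[OF gamma(1) mM(2)] k by blast
  show "lower_cover n \<gamma> \<in> perms n"
    unfolding J(2) using perms_comp_simple_transp[OF gamma(1) k(1,2)] .
  show "inv_set n (lower_cover n \<gamma>) = cut_inversions n (arc n m M S) - {(m,M)}"
    unfolding J(2) using inv_set_comp_simple_transp[OF gamma(1) k(1,2)] k mM gamma(2) by simp
qed

section \<open>A congruence preserving the unforced inversions\<close>

lemma diagram_edgesE:
  assumes "(s,t) \<in> diagram_edges n up"
  obtains b where "2 \<le> b" "b \<le> n - 1"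
    "(s,t) = (if up b then (simple_transp b, simple_transp (b - 1))
              else (simple_transp (b - 1), simple_transp b))"
  using assms unfolding diagram_edges_def by auto

lemma diagram_edge_inv_sets:
  assumes b: "2 \<le> b" "b \<le> n - 1"
    and st: "(s,t) = (if up b then (simple_transp b, simple_transp (b - 1))
                      else (simple_transp (b - 1), simple_transp b))"
  shows "(s,t) \<in> diagram_edges n up" "t \<in> perms n" "t \<circ> s \<in> perms n"
    "inv_set n t = (if up b then {(b - 1, b)} else {(b, Suc b)})"
    "inv_set n (t \<circ> s) = insert (b - 1, Suc b) (inv_set n t)"
proof -
  have sb: "Suc (b - 1) = b" using b by auto
  show "(s,t) \<in> diagram_edges n up"
    using b st unfolding diagram_edges_def by (cases "up b") auto
  show "inv_set n (t \<circ> s) = insert (b - 1, Suc b) (inv_set n t)"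
  proof (cases "up b")
    case True
    then have "s = simple_transp b" "t = simple_transp (b - 1)" using st by auto
    moreover have "simple_transp (b - 1) b = b - 1" "simple_transp (b - 1) (Suc b) = Suc b"
      using sb unfolding simple_transp_def by (auto simp: transpose_def)
    ultimately show ?thesis
      using inv_set_comp_simple_transp[OF simple_transp_in_perms, of "b - 1" n b] b by auto
  next
    case False
    then have "s = simple_transp (b - 1)" "t = simple_transp b" using st by auto
    moreover have "simple_transp b (b - 1) = b - 1" "simple_transp b (Suc (b - 1)) = Suc b"
      using sb b unfolding simple_transp_def by (auto simp: transpose_def)
    ultimately show ?thesis
      using inv_set_comp_simple_transp[OF simple_transp_in_perms, of b n "b - 1"] b sb by auto
  qed
  show "t \<in> perms n" "t \<circ> s \<in> perms n"
    using st b simple_transp_in_perms perms_comp_simple_transp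
    by (auto split: if_splits simp del: One_nat_def)
  show "inv_set n t = (if up b then {(b - 1, b)} else {(b, Suc b)})"
    using st b inv_set_simple_transp[of "b - 1" n] inv_set_simple_transp[of b n] sb
    by (auto split: if_splits)
qed

definition forced :: "(nat \<Rightarrow> bool) \<Rightarrow> (nat \<times> nat) set \<Rightarrow> nat \<Rightarrow> nat \<Rightarrow> bool" where
  "forced up S p q \<longleftrightarrow> (\<exists>d. p < d \<and> d < q \<and> ((up d \<and> (p,d) \<in> S) \<or> (\<not> up d \<and> (d,q) \<in> S)))"

definition unforced_inversions :: "(nat \<Rightarrow> bool) \<Rightarrow> (nat \<times> nat) set \<Rightarrow> (nat \<times> nat) set" where
  "unforced_inversions up S = {(p,q) \<in> S. \<not> forced up S p q}"

definition forced_edges :: "nat \<Rightarrow> (nat \<Rightarrow> bool) \<Rightarrow> ((nat \<Rightarrow> nat) \<times> (nat \<Rightarrow> nat)) set" where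
  "forced_edges n up = {(u,v). u \<in> perms n \<and> v \<in> perms n \<and> (\<exists>p q. (p,q) \<notin> inv_set n u \<and>
      inv_set n v = insert (p,q) (inv_set n u) \<and> forced up (inv_set n v) p q)}"

definition forced_cong :: "nat \<Rightarrow> (nat \<Rightarrow> bool) \<Rightarrow> ((nat \<Rightarrow> nat) \<times> (nat \<Rightarrow> nat)) set" where
  "forced_cong n up = {(x,y). x \<in> perms n \<and> y \<in> perms n \<and>
      (x,y) \<in> (forced_edges n up \<union> (forced_edges n up)\<inverse>)\<^sup>*}"

lemma forced_edgesE:
  assumes "(u,v) \<in> forced_edges n up"
  obtains p q where "u \<in> perms n" "v \<in> perms n" "(p,q) \<notin> inv_set n u"
    "inv_set n v = insert (p,q) (inv_set n u)" "forced up (inv_set n v) p q"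
  using assms unfolding forced_edges_def by blast

lemma forced_insert_self: "a < c \<Longrightarrow> forced up (insert (a,c) U) a c \<longleftrightarrow> forced up U a c"
  unfolding forced_def by auto

text \<open>Adding a forced inversion \<open>(a,c)\<close> forces no other inversion: an inversion forced
  through \<open>(a,c)\<close> is, by biclosedness, already forced through the element forcing \<open>(a,c)\<close>.\<close>

lemma forced_insert_iff:
  assumes U: "biclosed n U" and ac: "(a,c) \<notin> U" "forced up U a c" and pq: "(p,q) \<in> U"
  shows "forced up (insert (a,c) U) p q \<longleftrightarrow> forced up U p q"
proof
  note B = biclosedD[OF U]
  obtain d0 where d0: "a < d0" "d0 < c" "(up d0 \<and> (a,d0) \<in> U) \<or> (\<not> up d0 \<and> (d0,c) \<in> U)"
    using ac(2) unfolding forced_def by blast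
  assume "forced up (insert (a,c) U) p q"
  then obtain d where d: "p < d" "d < q"
    "(up d \<and> (p,d) \<in> insert (a,c) U) \<or> (\<not> up d \<and> (d,q) \<in> insert (a,c) U)"
    unfolding forced_def by blast
  consider "(up d \<and> (p,d) \<in> U) \<or> (\<not> up d \<and> (d,q) \<in> U)"
    | "up d" "p = a" "d = c" | "\<not> up d" "d = a" "q = c"
    using d by auto
  then show "forced up U p q"
  proof cases
    case 1
    then show ?thesis using d unfolding forced_def by blast
  next
    case 2
    then have "(c,q) \<in> U" using B(3)[of a q c] pq d ac(1) d0 by auto
    then show ?thesis unfolding forced_def using d0 2 d B(2)[of d0 c q] by (intro exI[of _ d0]) auto
  next
    case 3
    then have "(p,a) \<in> U" using B(3)[of p c a] pq d ac(1) d0 by auto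
    then show ?thesis unfolding forced_def using d0 3 d B(2)[of p a d0] by (intro exI[of _ d0]) auto
  qed
qed (auto simp: forced_def)

lemma unforced_inversions_forced_edge:
  assumes "(u,v) \<in> forced_edges n up"
  shows "unforced_inversions up (inv_set n u) = unforced_inversions up (inv_set n v)"
proof -
  obtain a c where u: "u \<in> perms n" and ac: "(a,c) \<notin> inv_set n u"
    and V: "inv_set n v = insert (a,c) (inv_set n u)" and forced_ac: "forced up (inv_set n v) a c"
    using assms by (rule forced_edgesE)
  have "a < c" using forced_ac unfolding forced_def by auto
  then have "forced up (inv_set n u) a c" using forced_insert_self forced_ac V by metis
  then show ?thesis
    using forced_insert_iff[OF inv_set_biclosed[OF u] ac] forced_ac ac
    unfolding unforced_inversions_def V by auto
qed

text \<open>\<open>forced_between up S T p q\<close> makes \<open>(p,q)\<close> forced in every biclosed set containing it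
  that lies between \<open>S\<close> and \<open>T\<close>.\<close>

definition forced_between :: "(nat \<Rightarrow> bool) \<Rightarrow> (nat \<times> nat) set \<Rightarrow> (nat \<times> nat) set \<Rightarrow> nat \<Rightarrow> nat \<Rightarrow> bool" where
  "forced_between up S T p q \<longleftrightarrow> (\<exists>d. p < d \<and> d < q \<and>
     ((up d \<and> ((p,d) \<in> S \<or> (d,q) \<notin> T)) \<or> (\<not> up d \<and> ((d,q) \<in> S \<or> (p,d) \<notin> T))))"

lemma forced_edge_of_ascent:
  assumes s: "s \<in> perms n" and sub: "inv_set n s \<subseteq> inv_set n t"
    and i: "1 \<le> i" "i < n" "s i < s (Suc i)" "(s i, s (Suc i)) \<in> inv_set n t"
    and W: "forced_between up (inv_set n s) (inv_set n t) (s i) (s (Suc i))"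
  shows "(s, s \<circ> simple_transp i) \<in> forced_edges n up"
proof -
  let ?s' = "s \<circ> simple_transp i"
  have s': "?s' \<in> perms n" using perms_comp_simple_transp[OF s i(1,2)] .
  have Is': "inv_set n ?s' = insert (s i, s (Suc i)) (inv_set n s)"
    using inv_set_comp_simple_transp[OF s i(1,2)] i(3) by simp
  have notin: "(s i, s (Suc i)) \<notin> inv_set n s"
    using s by (simp add: inv_set_iff perms_iff_permutes permutes_inverses)
  obtain d where d: "s i < d" "d < s (Suc i)"
    "(up d \<and> ((s i,d) \<in> inv_set n s \<or> (d, s (Suc i)) \<notin> inv_set n t)) \<or>
     (\<not> up d \<and> ((d, s (Suc i)) \<in> inv_set n s \<or> (s i, d) \<notin> inv_set n t))"
    using W unfolding forced_between_def by blast
  have "(s i, d) \<in> inv_set n ?s' \<or> (d, s (Suc i)) \<in> inv_set n ?s'"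
    using biclosedD(3)[OF inv_set_biclosed[OF s']] Is' d(1,2) by blast
  moreover have "inv_set n ?s' \<subseteq> inv_set n t" using Is' sub i(4) by auto
  ultimately have "forced up (inv_set n ?s') (s i) (s (Suc i))"
    unfolding forced_def using d Is' by blast
  then show ?thesis unfolding forced_edges_def using s s' Is' notin by blast
qed

lemma forced_edges_chain:
  assumes "s \<in> perms n" "t \<in> perms n" "inv_set n s \<subseteq> inv_set n t"
    "\<forall>(p,q) \<in> inv_set n t - inv_set n s. forced_between up (inv_set n s) (inv_set n t) p q"
  shows "(s,t) \<in> (forced_edges n up)\<^sup>*"
  using assms
proof (induction "card (inv_set n t - inv_set n s)" arbitrary: s rule: less_induct)
  case less
  note s = less.prems(1) and t = less.prems(2) and sub = less.prems(3) and W = less.prems(4)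
  show ?case
  proof (cases "inv_set n s = inv_set n t")
    case True
    then show ?thesis using inv_set_inj[OF s t] by simp
  next
    case False
    obtain i where i: "1 \<le> i" "i < n" "s i < s (Suc i)" "(s i, s (Suc i)) \<in> inv_set n t"
      using exists_ascent_inverted[OF s t sub False] by blast
    define s' where "s' = s \<circ> simple_transp i"
    have Is': "inv_set n s' = insert (s i, s (Suc i)) (inv_set n s)"
      unfolding s'_def using inv_set_comp_simple_transp[OF s i(1,2)] i(3) by simp
    have notin: "(s i, s (Suc i)) \<notin> inv_set n s"
      using s by (simp add: inv_set_iff perms_iff_permutes permutes_inverses)
    have s': "s' \<in> perms n" unfolding s'_def by (rule perms_comp_simple_transp[OF s i(1,2)])
    have sub': "inv_set n s' \<subseteq> inv_set n t" using Is' sub i(4) by auto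
    have "(s, s') \<in> forced_edges n up"
      unfolding s'_def using forced_edge_of_ascent[OF s sub i] W i(4) notin by blast
    moreover have "(s', t) \<in> (forced_edges n up)\<^sup>*"
    proof (rule less.hyps)
      have "finite (inv_set n t - inv_set n s)"
        using inv_set_subset[OF t] finite_inversion_pairs by (meson finite_Diff finite_subset)
      then show "card (inv_set n t - inv_set n s') < card (inv_set n t - inv_set n s)"
        using Is' notin i(4) by (intro psubset_card_mono) auto
      show "\<forall>(p,q) \<in> inv_set n t - inv_set n s'. forced_between up (inv_set n s') (inv_set n t) p q"
        using W Is' unfolding forced_between_def by blast
    qed (use s' t sub' in auto)
    ultimately show ?thesis by (meson converse_rtrancl_into_rtrancl)
  qed
qed

lemma rtrancl_inversion_pairs_le: "(x,y) \<in> R\<^sup>* \<Longrightarrow> R \<subseteq> inversion_pairs n \<Longrightarrow> x \<le> y"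
  by (induction rule: rtrancl_induct) (auto simp: inversion_pairs_def)

lemma forced_edge_witness:
  assumes "(u,v) \<in> forced_edges n up"
  obtains a c d where "u \<in> perms n" "v \<in> perms n" "(a,c) \<notin> inv_set n u"
    "inv_set n v = insert (a,c) (inv_set n u)" "a < d" "d < c"
    "up d \<and> (a,d) \<in> inv_set n u \<and> (d,c) \<notin> inv_set n u \<or>
     \<not> up d \<and> (d,c) \<in> inv_set n u \<and> (a,d) \<notin> inv_set n u"
proof -
  obtain a c where uv: "u \<in> perms n" "v \<in> perms n" and ac: "(a,c) \<notin> inv_set n u"
    and V: "inv_set n v = insert (a,c) (inv_set n u)" and forced_ac: "forced up (inv_set n v) a c"
    using assms by (rule forced_edgesE)
  obtain d where d: "a < d" "d < c" "(up d \<and> (a,d) \<in> inv_set n v) \<or> (\<not> up d \<and> (d,c) \<in> inv_set n v)"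
    using forced_ac unfolding forced_def by blast
  then have "up d \<and> (a,d) \<in> inv_set n u \<or> \<not> up d \<and> (d,c) \<in> inv_set n u" using V by auto
  then have "up d \<and> (a,d) \<in> inv_set n u \<and> (d,c) \<notin> inv_set n u \<or>
     \<not> up d \<and> (d,c) \<in> inv_set n u \<and> (a,d) \<notin> inv_set n u"
    using biclosedD(2)[OF inv_set_biclosed[OF uv(1)]] ac by blast
  then show ?thesis using that uv ac V d(1,2) by blast
qed

text \<open>Joining both ends of a forced edge with \<open>z\<close> adds the inversions \<open>(p,q)\<close> with
  \<open>p \<le> a\<close>, \<open>c \<le> q\<close> chained to the new inversion \<open>(a,c)\<close>; the element \<open>d\<close> forcing \<open>(a,c)\<close>
  forces each of them. Meets are dual.\<close>

lemma join_forced_edge: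
  assumes e: "(u,v) \<in> forced_edges n up" and z: "z \<in> perms n"
    and ju: "is_join n u z j1" and jv: "is_join n v z j2"
  shows "(j1, j2) \<in> (forced_edges n up)\<^sup>*"
proof -
  obtain a c d where u: "u \<in> perms n" and v: "v \<in> perms n"
    and V: "inv_set n v = insert (a,c) (inv_set n u)" and d: "a < d" "d < c"
    and forcing: "up d \<and> (a,d) \<in> inv_set n u \<or> \<not> up d \<and> (d,c) \<in> inv_set n u"
    using e by (rule forced_edge_witness) blast
  define R where "R = inv_set n u \<union> inv_set n z"
  have R_sub: "R \<subseteq> inversion_pairs n" unfolding R_def using inv_set_subset u z by auto
  have J1: "j1 \<in> perms n" "inv_set n j1 = R\<^sup>+" using ju is_join_iff[OF u z] R_def by auto
  have J2: "j2 \<in> perms n" "inv_set n j2 = R\<^sup>+ \<union> {(x,y). (x,a) \<in> R\<^sup>* \<and> (c,y) \<in> R\<^sup>*}"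
    using jv is_join_iff[OF v z] V R_def by (auto simp: trancl_insert)
  have R_d: "(up d \<and> (a,d) \<in> R) \<or> (\<not> up d \<and> (d,c) \<in> R)"
    using forcing unfolding R_def by auto
  show ?thesis
  proof (rule forced_edges_chain[OF J1(1) J2(1)])
    show "inv_set n j1 \<subseteq> inv_set n j2" using J1 J2 by auto
    show "\<forall>(p,q) \<in> inv_set n j2 - inv_set n j1. forced_between up (inv_set n j1) (inv_set n j2) p q"
    proof clarify
      fix p q assume "(p,q) \<in> inv_set n j2" "(p,q) \<notin> inv_set n j1"
      then have pa: "(p,a) \<in> R\<^sup>*" and cq: "(c,q) \<in> R\<^sup>*" using J1 J2 by auto
      have "p \<le> a" "c \<le> q"
        using rtrancl_inversion_pairs_le[OF pa R_sub] rtrancl_inversion_pairs_le[OF cq R_sub] .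
      moreover have "(up d \<and> (p,d) \<in> R\<^sup>+) \<or> (\<not> up d \<and> (d,q) \<in> R\<^sup>+)"
        using R_d pa cq by (meson rtrancl_into_trancl1 rtrancl_into_trancl2)
      ultimately show "forced_between up (inv_set n j1) (inv_set n j2) p q"
        unfolding forced_between_def using d J1 by (intro exI[of _ d]) auto
    qed
  qed
qed

lemma meet_forced_edge:
  assumes e: "(u,v) \<in> forced_edges n up" and z: "z \<in> perms n"
    and mu: "is_meet n u z j1" and mv: "is_meet n v z j2"
  shows "(j1, j2) \<in> (forced_edges n up)\<^sup>*"
proof -
  obtain a c d where u: "u \<in> perms n" and v: "v \<in> perms n" and ac: "(a,c) \<notin> inv_set n u"
    and V: "inv_set n v = insert (a,c) (inv_set n u)" and d: "a < d" "d < c"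
    and forcing: "up d \<and> (d,c) \<notin> inv_set n u \<or> \<not> up d \<and> (a,d) \<notin> inv_set n u"
    using e by (rule forced_edge_witness) blast
  have ac_pair: "(a,c) \<in> inversion_pairs n" using inv_set_subset[OF v] V by auto
  define R where "R = (inversion_pairs n - inv_set n v) \<union> (inversion_pairs n - inv_set n z)"
  have R_sub: "R \<subseteq> inversion_pairs n" unfolding R_def by auto
  have "(inversion_pairs n - inv_set n u) \<union> (inversion_pairs n - inv_set n z) = insert (a,c) R"
    unfolding R_def using V ac_pair ac by auto
  then have J1: "j1 \<in> perms n"
    "inv_set n j1 = inversion_pairs n - (R\<^sup>+ \<union> {(x,y). (x,a) \<in> R\<^sup>* \<and> (c,y) \<in> R\<^sup>*})"
    using mu is_meet_iff[OF u z] by (auto simp: trancl_insert)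
  have J2: "j2 \<in> perms n" "inv_set n j2 = inversion_pairs n - R\<^sup>+"
    using mv is_meet_iff[OF v z] R_def by auto
  have "(a,d) \<in> inversion_pairs n" "(d,c) \<in> inversion_pairs n"
    using ac_pair d unfolding inversion_pairs_def by auto
  then have R_d: "(up d \<and> (d,c) \<in> R) \<or> (\<not> up d \<and> (a,d) \<in> R)"
    using forcing V d unfolding R_def by auto
  show ?thesis
  proof (rule forced_edges_chain[OF J1(1) J2(1)])
    show "inv_set n j1 \<subseteq> inv_set n j2" using J1 J2 by auto
    show "\<forall>(p,q) \<in> inv_set n j2 - inv_set n j1. forced_between up (inv_set n j1) (inv_set n j2) p q"
    proof clarify
      fix p q assume "(p,q) \<in> inv_set n j2" "(p,q) \<notin> inv_set n j1"
      then have pa: "(p,a) \<in> R\<^sup>*" and cq: "(c,q) \<in> R\<^sup>*" using J1 J2 by auto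
      have "p \<le> a" "c \<le> q"
        using rtrancl_inversion_pairs_le[OF pa R_sub] rtrancl_inversion_pairs_le[OF cq R_sub] .
      moreover have "(up d \<and> (d,q) \<in> R\<^sup>+) \<or> (\<not> up d \<and> (p,d) \<in> R\<^sup>+)"
        using R_d pa cq by (meson rtrancl_into_trancl1 rtrancl_into_trancl2)
      ultimately show "forced_between up (inv_set n j1) (inv_set n j2) p q"
        unfolding forced_between_def using d J2 by (intro exI[of _ d]) auto
    qed
  qed
qed

lemma forced_edges_perms: "(x,y) \<in> forced_edges n up \<Longrightarrow> x \<in> perms n \<and> y \<in> perms n"
  unfolding forced_edges_def by auto

lemma forced_edges_rtrancl_forced_cong:
  assumes "(x,y) \<in> (forced_edges n up)\<^sup>*" "x \<in> perms n"
  shows "(x,y) \<in> forced_cong n up"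
proof -
  have "y \<in> perms n" using assms
    by (induction rule: rtrancl_induct) (auto dest: forced_edges_perms)
  moreover have "(x,y) \<in> (forced_edges n up \<union> (forced_edges n up)\<inverse>)\<^sup>*"
    using assms(1) by (rule rtrancl_mono[THEN subsetD, rotated]) auto
  ultimately show ?thesis using assms unfolding forced_cong_def by auto
qed

lemma equiv_forced_cong: "equiv (perms n) (forced_cong n up)"
proof (rule equivI)
  let ?E = "forced_edges n up \<union> (forced_edges n up)\<inverse>"
  show "sym (forced_cong n up)"
  proof (rule symI)
    fix x y assume xy: "(x,y) \<in> forced_cong n up"
    then have "(y,x) \<in> (?E\<inverse>)\<^sup>*" unfolding forced_cong_def by (simp add: rtrancl_converse)
    moreover have "?E\<inverse> = ?E" by auto
    ultimately show "(y,x) \<in> forced_cong n up" using xy unfolding forced_cong_def by auto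
  qed
  show "refl_on (perms n) (forced_cong n up)"
    unfolding forced_cong_def by (intro refl_onI) auto
  show "forced_cong n up \<subseteq> perms n \<times> perms n"
    unfolding forced_cong_def by auto
  show "trans (forced_cong n up)"
    unfolding forced_cong_def by (intro transI) (auto intro: rtrancl_trans)
qed

lemma forced_cong_compatible:
  assumes op_total: "\<And>x. x \<in> perms n \<Longrightarrow> \<exists>j. op x j"
    and op_unique: "\<And>x j j'. x \<in> perms n \<Longrightarrow> op x j \<Longrightarrow> op x j' \<Longrightarrow> j = j'"
    and op_perms: "\<And>x j. op x j \<Longrightarrow> j \<in> perms n"
    and op_edge: "\<And>u v j1 j2. (u,v) \<in> forced_edges n up \<Longrightarrow> op u j1 \<Longrightarrow> op v j2 \<Longrightarrow>
       (j1,j2) \<in> (forced_edges n up)\<^sup>*"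
    and xy: "(x,y) \<in> forced_cong n up" and j: "op x j" and j': "op y j'"
  shows "(j,j') \<in> forced_cong n up"
proof -
  have x: "x \<in> perms n" and path: "(x,y) \<in> (forced_edges n up \<union> (forced_edges n up)\<inverse>)\<^sup>*"
    using xy unfolding forced_cong_def by auto
  note E = equiv_forced_cong[of n up]
  have edge: "(j1,j2) \<in> forced_cong n up"
    if "(u,v) \<in> forced_edges n up \<union> (forced_edges n up)\<inverse>" "op u j1" "op v j2" for u v j1 j2
  proof (cases "(u,v) \<in> forced_edges n up")
    case True
    then show ?thesis using that op_edge op_perms forced_edges_rtrancl_forced_cong by blast
  next
    case False
    then have "(j2,j1) \<in> forced_cong n up"
      using that op_edge op_perms forced_edges_rtrancl_forced_cong by blast
    then show ?thesis using E by (meson equiv_def symD)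
  qed
  from path j' show ?thesis
  proof (induction arbitrary: j' rule: rtrancl_induct)
    case base
    then show ?case using op_unique[OF x j] op_perms[OF j] E by (metis equiv_def refl_onD)
  next
    case (step y y')
    have "y \<in> perms n" using step(2) by (auto dest: forced_edges_perms)
    then obtain jy where jy: "op y jy" using op_total by blast
    then have "(j,jy) \<in> forced_cong n up" "(jy,j') \<in> forced_cong n up"
      using step edge by blast+
    then show ?case using E by (meson equiv_def transD)
  qed
qed

lemma forced_cong_lattice_congruence: "lattice_congruence n (forced_cong n up)"
  unfolding lattice_congruence_def
proof (intro conjI allI impI)
  fix x y z j j' assume xy: "(x,y) \<in> forced_cong n up" and z: "z \<in> perms n"
  show "is_join n x z j \<Longrightarrow> is_join n y z j' \<Longrightarrow> (j,j') \<in> forced_cong n up"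
  proof (rule forced_cong_compatible[of n "\<lambda>x j. is_join n x z j", OF _ _ _ _ xy])
    show "\<exists>j. is_join n x z j" if "x \<in> perms n" for x using join_exists[OF that z] .
    show "j = j'" if "x \<in> perms n" "is_join n x z j" "is_join n x z j'" for x j j'
      using that is_join_iff[OF that(1) z] inv_set_inj by metis
  qed (auto simp: is_join_def intro: join_forced_edge[OF _ z])
  show "is_meet n x z j \<Longrightarrow> is_meet n y z j' \<Longrightarrow> (j,j') \<in> forced_cong n up"
  proof (rule forced_cong_compatible[of n "\<lambda>x j. is_meet n x z j", OF _ _ _ _ xy])
    show "\<exists>j. is_meet n x z j" if "x \<in> perms n" for x using meet_exists[OF that z] .
    show "j = j'" if "x \<in> perms n" "is_meet n x z j" "is_meet n x z j'" for x j j'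
      using that is_meet_iff[OF that(1) z] inv_set_inj by metis
  qed (auto simp: is_meet_def intro: meet_forced_edge[OF _ z])
qed (rule equiv_forced_cong)

lemma unforced_inversions_forced_cong:
  assumes "(x,y) \<in> forced_cong n up"
  shows "unforced_inversions up (inv_set n x) = unforced_inversions up (inv_set n y)"
proof -
  have "(x,y) \<in> (forced_edges n up \<union> (forced_edges n up)\<inverse>)\<^sup>*"
    using assms unfolding forced_cong_def by auto
  then show ?thesis
    by (induction rule: rtrancl_induct) (auto dest: unforced_inversions_forced_edge)
qed

lemma Theta_G_subset_forced_cong: "Theta_G n up \<subseteq> forced_cong n up"
proof -
  have "(t, t \<circ> s) \<in> forced_cong n up" if edge: "(s,t) \<in> diagram_edges n up" for s t
  proof -
    obtain b where b: "2 \<le> b" "b \<le> n - 1"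
      and st: "(s,t) = (if up b then (simple_transp b, simple_transp (b - 1))
                        else (simple_transp (b - 1), simple_transp b))"
      using diagram_edgesE[OF edge] by blast
    note D = diagram_edge_inv_sets[where s = s and t = t and up = up, OF b st]
    have "forced up (inv_set n (t \<circ> s)) (b - 1) (Suc b)"
      unfolding forced_def using D(4,5) b by (intro exI[of _ b]) auto
    moreover have "(b - 1, Suc b) \<notin> inv_set n t" using D(4) b by auto
    ultimately have "(t, t \<circ> s) \<in> forced_edges n up"
      unfolding forced_edges_def using D(2,3,5) by blast
    then show ?thesis using forced_edges_rtrancl_forced_cong D(2) by blast
  qed
  then show ?thesis
    unfolding Theta_G_def using forced_cong_lattice_congruence by blast
qed

section \<open>Polygon forcing in hexagons\<close>

text \<open>As
  \<open>(ka, kb, kc)\<close> runs through the permutations of \<open>(1, 2, 3)\<close>, the corresponding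
  permutations form a hexagonal interval of the weak order.\<close>

definition hex_rank :: "nat \<Rightarrow> nat \<Rightarrow> nat \<Rightarrow> (nat \<Rightarrow> bool) \<Rightarrow> nat \<Rightarrow> nat \<Rightarrow> nat \<Rightarrow> nat \<Rightarrow> nat" where
  "hex_rank a b c L ka kb kc d = (if d = a then ka else if d = b then kb else if d = c then kc
      else if L d then 0 else 4)"

definition hex_perm ::
  "nat \<Rightarrow> nat \<Rightarrow> nat \<Rightarrow> nat \<Rightarrow> (nat \<Rightarrow> bool) \<Rightarrow> nat \<Rightarrow> nat \<Rightarrow> nat \<Rightarrow> (nat \<Rightarrow> nat)" where
  "hex_perm n a b c L ka kb kc =
     (SOME w. w \<in> perms n \<and> inv_set n w = rank_inversions n (hex_rank a b c L ka kb kc))"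

lemma hex_perm_spec:
  "hex_perm n a b c L ka kb kc \<in> perms n"
  "inv_set n (hex_perm n a b c L ka kb kc) = rank_inversions n (hex_rank a b c L ka kb kc)"
  using someI_ex[OF rank_inversions_realizable[unfolded Bex_def]]
  unfolding hex_perm_def by blast+

lemma hex_rank_outside:
  assumes "\<not> (p \<in> {a,b,c} \<and> q \<in> {a,b,c})"
    "ka \<in> {1,2,3}" "kb \<in> {1,2,3}" "kc \<in> {1,2,3}"
  shows "hex_rank a b c L ka kb kc q < hex_rank a b c L ka kb kc p \<longleftrightarrow>
    hex_rank a b c L 1 2 3 q < hex_rank a b c L 1 2 3 p"
proof -
  have inside: "hex_rank a b c L ka kb kc x \<in> {1,2,3} \<and> hex_rank a b c L 1 2 3 x \<in> {1,2,3}"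
    if "x \<in> {a,b,c}" for x
    using that assms unfolding hex_rank_def by auto
  have outside: "hex_rank a b c L ka kb kc x = hex_rank a b c L 1 2 3 x \<and>
      hex_rank a b c L 1 2 3 x \<in> {0,4}" if "x \<notin> {a,b,c}" for x
    using that unfolding hex_rank_def by auto
  show ?thesis
  proof (cases "p \<in> {a,b,c}")
    case True
    then have "q \<notin> {a,b,c}" using assms by auto
    then show ?thesis using inside[OF True] outside[of q] by auto
  next
    case False
    show ?thesis
    proof (cases "q \<in> {a,b,c}")
      case True then show ?thesis using inside[OF True] outside[OF False] by auto
    next
      case False': False then show ?thesis using outside[OF False] outside[OF False'] by auto
    qed
  qed
qed

lemma lattice_congruence_hexagon_bottom:
  assumes cong: "lattice_congruence n \<Theta>" and x_p1: "(x,p1) \<in> \<Theta>"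
    and q: "q1 \<in> perms n" "q2 \<in> perms n"
    and "is_join n x q1 q1" "is_join n p1 q1 y" "is_meet n q1 q2 q1" "is_meet n y q2 q2"
  shows "(q1,q2) \<in> \<Theta>"
proof -
  have "(q1,y) \<in> \<Theta>" using lattice_congruence_join[OF cong x_p1 q(1)] assms by blast
  then show ?thesis using lattice_congruence_meet[OF cong _ q(2)] assms by blast
qed

lemma lattice_congruence_hexagon_top:
  assumes cong: "lattice_congruence n \<Theta>" and q2_y: "(q2,y) \<in> \<Theta>"
    and p: "p1 \<in> perms n" "p2 \<in> perms n"
    and "is_meet n q2 p2 x" "is_meet n y p2 p2" "is_join n x p1 p1" "is_join n p2 p1 p2"
  shows "(p1,p2) \<in> \<Theta>"
proof -
  have "(x,p2) \<in> \<Theta>" using lattice_congruence_meet[OF cong q2_y p(2)] assms by blast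
  then show ?thesis using lattice_congruence_join[OF cong _ p(1)] assms by blast
qed

context
  fixes n a b c :: nat and L :: "nat \<Rightarrow> bool"
  assumes abc: "1 \<le> a" "a < b" "b < c" "c \<le> n"
begin

lemma hex_inversions_eq:
  assumes "ka \<in> {1,2,3}" "kb \<in> {1,2,3}" "kc \<in> {1,2,3}"
  shows "inv_set n (hex_perm n a b c L ka kb kc) =
    {(p,q) \<in> inv_set n (hex_perm n a b c L 1 2 3). \<not> (p \<in> {a,b,c} \<and> q \<in> {a,b,c})} \<union>
    (if kb < ka then {(a,b)} else {}) \<union> (if kc < ka then {(a,c)} else {}) \<union>
    (if kc < kb then {(b,c)} else {})"
proof (intro set_eqI, clarify)
  fix p q
  have ranks: "hex_rank a b c L ka kb kc a = ka" "hex_rank a b c L ka kb kc b = kb"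
    "hex_rank a b c L ka kb kc c = kc"
    using abc unfolding hex_rank_def by auto
  show "(p,q) \<in> inv_set n (hex_perm n a b c L ka kb kc) \<longleftrightarrow> (p,q) \<in>
    {(p,q) \<in> inv_set n (hex_perm n a b c L 1 2 3). \<not> (p \<in> {a,b,c} \<and> q \<in> {a,b,c})} \<union>
    (if kb < ka then {(a,b)} else {}) \<union> (if kc < ka then {(a,c)} else {}) \<union>
    (if kc < kb then {(b,c)} else {})"
  proof (cases "p \<in> {a,b,c} \<and> q \<in> {a,b,c}")
    case True
    show ?thesis
    proof (cases "p < q")
      case True
      then have "(p,q) = (a,b) \<or> (p,q) = (a,c) \<or> (p,q) = (b,c)"
        using \<open>p \<in> {a,b,c} \<and> q \<in> {a,b,c}\<close> abc by auto
      then show ?thesis using abc ranks unfolding hex_perm_spec rank_inversions_def by auto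
    next
      case False
      then show ?thesis using abc unfolding hex_perm_spec rank_inversions_def by auto
    qed
  next
    case False
    then show ?thesis using hex_rank_outside[OF False assms] unfolding hex_perm_spec rank_inversions_def
      by auto
  qed
qed

lemma hex_inversions:
  defines "K ka kb kc \<equiv> inv_set n (hex_perm n a b c L ka kb kc)"
  shows "K 2 1 3 = insert (a,b) (K 1 2 3)" "K 1 3 2 = insert (b,c) (K 1 2 3)"
    "K 2 3 1 = {(a,c),(b,c)} \<union> K 1 2 3" "K 3 1 2 = {(a,b),(a,c)} \<union> K 1 2 3"
    "K 3 2 1 = {(a,b),(a,c),(b,c)} \<union> K 1 2 3"
    "(a,b) \<notin> K 1 2 3" "(a,c) \<notin> K 1 2 3" "(b,c) \<notin> K 1 2 3"
proof -
  define B where "B = {(p,q) \<in> K 1 2 3. \<not> (p \<in> {a,b,c} \<and> q \<in> {a,b,c})}"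
  have "K 1 2 3 = B" "K 2 1 3 = insert (a,b) B" "K 1 3 2 = insert (b,c) B"
    "K 2 3 1 = {(a,c),(b,c)} \<union> B" "K 3 1 2 = {(a,b),(a,c)} \<union> B"
    "K 3 2 1 = {(a,b),(a,c),(b,c)} \<union> B"
    unfolding K_def B_def by (subst hex_inversions_eq; auto)+
  moreover have "(a,b) \<notin> B" "(a,c) \<notin> B" "(b,c) \<notin> B" unfolding B_def by auto
  ultimately show "K 2 1 3 = insert (a,b) (K 1 2 3)" "K 1 3 2 = insert (b,c) (K 1 2 3)"
    "K 2 3 1 = {(a,c),(b,c)} \<union> K 1 2 3" "K 3 1 2 = {(a,b),(a,c)} \<union> K 1 2 3"
    "K 3 2 1 = {(a,b),(a,c),(b,c)} \<union> K 1 2 3"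
    "(a,b) \<notin> K 1 2 3" "(a,c) \<notin> K 1 2 3" "(b,c) \<notin> K 1 2 3"
    by simp_all
qed

lemma hexagon_join_meet:
  defines "h ka kb kc \<equiv> hex_perm n a b c L ka kb kc"
  shows "inv_set n (h 1 2 3) \<subseteq> inv_set n (h 2 1 3)" "inv_set n (h 1 2 3) \<subseteq> inv_set n (h 1 3 2)"
    "inv_set n (h 2 1 3) \<subseteq> inv_set n (h 3 1 2)" "inv_set n (h 1 3 2) \<subseteq> inv_set n (h 2 3 1)"
    "inv_set n (h 3 1 2) \<subseteq> inv_set n (h 3 2 1)" "inv_set n (h 2 3 1) \<subseteq> inv_set n (h 3 2 1)"
    and "is_join n (h 2 1 3) (h 1 3 2) (h 3 2 1)" "is_join n (h 1 3 2) (h 2 1 3) (h 3 2 1)"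
    and "is_meet n (h 3 1 2) (h 2 3 1) (h 1 2 3)" "is_meet n (h 2 3 1) (h 3 1 2) (h 1 2 3)"
proof -
  note H = hex_inversions[folded h_def]
  have perm: "h ka kb kc \<in> perms n" for ka kb kc unfolding h_def by (rule hex_perm_spec)
  show le: "inv_set n (h 1 2 3) \<subseteq> inv_set n (h 2 1 3)" "inv_set n (h 1 2 3) \<subseteq> inv_set n (h 1 3 2)"
    "inv_set n (h 2 1 3) \<subseteq> inv_set n (h 3 1 2)" "inv_set n (h 1 3 2) \<subseteq> inv_set n (h 2 3 1)"
    "inv_set n (h 3 1 2) \<subseteq> inv_set n (h 3 2 1)" "inv_set n (h 2 3 1) \<subseteq> inv_set n (h 3 2 1)"
    unfolding H by auto
  have "inv_set n (h 3 2 1) \<subseteq> inv_set n u"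
    if u: "u \<in> perms n" "inv_set n (h 2 1 3) \<subseteq> inv_set n u" "inv_set n (h 1 3 2) \<subseteq> inv_set n u" for u
  proof -
    have "(a,b) \<in> inv_set n u" "(b,c) \<in> inv_set n u" using u(2,3) unfolding H by auto
    then have "(a,c) \<in> inv_set n u" using biclosedD(2)[OF inv_set_biclosed[OF u(1)]] by blast
    then show ?thesis using u(2,3) \<open>(a,b) \<in> inv_set n u\<close> \<open>(b,c) \<in> inv_set n u\<close> unfolding H by auto
  qed
  then show "is_join n (h 2 1 3) (h 1 3 2) (h 3 2 1)" "is_join n (h 1 3 2) (h 2 1 3) (h 3 2 1)"
    using perm le unfolding is_join_def weak_le_def by blast+
  have "inv_set n w \<subseteq> inv_set n (h 1 2 3)"
    if w: "w \<in> perms n" "inv_set n w \<subseteq> inv_set n (h 3 1 2)" "inv_set n w \<subseteq> inv_set n (h 2 3 1)" for w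
  proof -
    have "(a,b) \<notin> inv_set n w" "(b,c) \<notin> inv_set n w" using w(2,3) H(6,8) abc unfolding H by auto
    then have "(a,c) \<notin> inv_set n w" using biclosedD(3)[OF inv_set_biclosed[OF w(1)]] abc by blast
    then show ?thesis using w(2,3) unfolding H by auto
  qed
  then show "is_meet n (h 3 1 2) (h 2 3 1) (h 1 2 3)" "is_meet n (h 2 3 1) (h 3 1 2) (h 1 2 3)"
    using perm le unfolding is_meet_def weak_le_def by blast+
qed

text \<open>Polygon forcing in the hexagon, whose two maximal chains are
  \<open>h 1 2 3 < h 2 1 3 < h 3 1 2 < h 3 2 1\<close> and \<open>h 1 2 3 < h 1 3 2 < h 2 3 1 < h 3 2 1\<close>:
  contracting a bottom edge of one chain contracts the opposite middle edge, and so does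
  contracting a top edge.\<close>

lemma hexagon_forcing:
  assumes cong: "lattice_congruence n \<Theta>"
  defines "h ka kb kc \<equiv> hex_perm n a b c L ka kb kc"
  shows "(h 1 2 3, h 2 1 3) \<in> \<Theta> \<Longrightarrow> (h 1 3 2, h 2 3 1) \<in> \<Theta>"
    and "(h 1 2 3, h 1 3 2) \<in> \<Theta> \<Longrightarrow> (h 2 1 3, h 3 1 2) \<in> \<Theta>"
    and "(h 2 3 1, h 3 2 1) \<in> \<Theta> \<Longrightarrow> (h 2 1 3, h 3 1 2) \<in> \<Theta>"
    and "(h 3 1 2, h 3 2 1) \<in> \<Theta> \<Longrightarrow> (h 1 3 2, h 2 3 1) \<in> \<Theta>"
proof -
  note HJM = hexagon_join_meet[folded h_def]
  have perm: "h ka kb kc \<in> perms n" for ka kb kc unfolding h_def by (rule hex_perm_spec)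
  note bottom = lattice_congruence_hexagon_bottom[OF cong _ perm perm]
  note top = lattice_congruence_hexagon_top[OF cong _ perm perm]
  show "(h 1 2 3, h 2 1 3) \<in> \<Theta> \<Longrightarrow> (h 1 3 2, h 2 3 1) \<in> \<Theta>"
    by (rule bottom) (use HJM perm in \<open>auto intro: is_join_of_le is_meet_of_le\<close>)
  show "(h 1 2 3, h 1 3 2) \<in> \<Theta> \<Longrightarrow> (h 2 1 3, h 3 1 2) \<in> \<Theta>"
    by (rule bottom) (use HJM perm in \<open>auto intro: is_join_of_le is_meet_of_le\<close>)
  show "(h 2 3 1, h 3 2 1) \<in> \<Theta> \<Longrightarrow> (h 2 1 3, h 3 1 2) \<in> \<Theta>"
    by (rule top) (use HJM perm in \<open>auto intro: is_join_of_le is_meet_of_le\<close>)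
  show "(h 3 1 2, h 3 2 1) \<in> \<Theta> \<Longrightarrow> (h 1 3 2, h 2 3 1) \<in> \<Theta>"
    by (rule top) (use HJM perm in \<open>auto intro: is_join_of_le is_meet_of_le\<close>)
qed

end

section \<open>Contracted arcs\<close>

text \<open>The set \<open>cut_inversions n (arc n a c S) - {(a,c)}\<close> is the inversion set of the lower
  cover of \<open>gamma_of n (arc n a c S)\<close>.\<close>

definition arc_contracted ::
  "nat \<Rightarrow> ((nat \<Rightarrow> nat) \<times> (nat \<Rightarrow> nat)) set \<Rightarrow> nat \<Rightarrow> nat \<Rightarrow> nat set \<Rightarrow> bool" where
  "arc_contracted n \<Theta> a c S \<longleftrightarrow> (\<forall>u v. u \<in> perms n \<longrightarrow> v \<in> perms n \<longrightarrow> (a,c) \<notin> inv_set n u \<longrightarrow>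
     inv_set n v = insert (a,c) (inv_set n u) \<longrightarrow>
     cut_inversions n (arc n a c S) - {(a,c)} \<subseteq> inv_set n u \<longrightarrow> (u,v) \<in> \<Theta>)"

lemma lower_cover_contracted_of_edge:
  assumes cong: "lattice_congruence n \<Theta>" and ac: "1 \<le> a" "a < c" "c \<le> n"
    and u0: "u0 \<in> perms n" and v0: "v0 \<in> perms n" and n0: "(a,c) \<notin> inv_set n u0"
    and e0: "inv_set n v0 = insert (a,c) (inv_set n u0)"
    and s0: "cut_inversions n (arc n a c S) - {(a,c)} \<subseteq> inv_set n u0" and th: "(u0,v0) \<in> \<Theta>"
  defines "\<gamma> \<equiv> gamma_of n (arc n a c S)"
  shows "(lower_cover n \<gamma>, \<gamma>) \<in> \<Theta>"
proof -
  let ?C = "cut_inversions n (arc n a c S)"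
  have j: "\<gamma> \<in> perms n" "inv_set n \<gamma> = ?C"
    unfolding \<gamma>_def using gamma_of_perm_inv_set[OF arc_subset[OF ac]] by blast+
  have j': "lower_cover n \<gamma> \<in> perms n" "inv_set n (lower_cover n \<gamma>) = ?C - {(a,c)}"
    unfolding \<gamma>_def using gamma_of_arc_join_irreducible[OF ac] by blast+
  have "is_meet n u0 \<gamma> (lower_cover n \<gamma>)"
    unfolding is_meet_def weak_le_def using j j' n0 s0 by blast
  moreover have "is_meet n v0 \<gamma> \<gamma>"
    using j v0 e0 s0 by (intro is_meet_of_le(2)) auto
  ultimately show ?thesis using lattice_congruence_meet[OF cong th j(1)] by blast
qed

lemma arc_contracted_of_lower_cover_contracted:
  assumes cong: "lattice_congruence n \<Theta>" and ac: "1 \<le> a" "a < c" "c \<le> n"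
    and th: "(lower_cover n (gamma_of n (arc n a c S)), gamma_of n (arc n a c S)) \<in> \<Theta>"
  shows "arc_contracted n \<Theta> a c S"
  unfolding arc_contracted_def
proof (intro allI impI)
  let ?C = "cut_inversions n (arc n a c S)" and ?\<gamma> = "gamma_of n (arc n a c S)"
  have j: "?\<gamma> \<in> perms n" "inv_set n ?\<gamma> = ?C"
    using gamma_of_perm_inv_set[OF arc_subset[OF ac]] by blast+
  have j': "lower_cover n ?\<gamma> \<in> perms n" "inv_set n (lower_cover n ?\<gamma>) = ?C - {(a,c)}"
    using gamma_of_arc_join_irreducible[OF ac] by blast+
  fix u v assume u: "u \<in> perms n" and v: "v \<in> perms n"
    and e1: "inv_set n v = insert (a,c) (inv_set n u)" and s1: "?C - {(a,c)} \<subseteq> inv_set n u"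
  have "is_join n (lower_cover n ?\<gamma>) u u" using is_join_of_le(1)[OF j'(1) u] j'(2) s1 by blast
  moreover have "is_join n ?\<gamma> u v"
    unfolding is_join_def weak_le_def using j v e1 s1 cut_inversions_arc_mem[OF ac] by auto
  ultimately show "(u,v) \<in> \<Theta>" using lattice_congruence_join[OF cong th u] by blast
qed

text \<open>One contracted cover adding \<open>(a,c)\<close> above the lower cover of the join-irreducible
  \<open>\<gamma>\<close> of \<open>arc n a c S\<close> contracts \<open>\<gamma>\<close> (take meets with \<open>\<gamma>\<close>), which in turn contracts all of
  them (take joins).\<close>

lemma arc_contracted_of_edge:
  assumes cong: "lattice_congruence n \<Theta>" and ac: "1 \<le> a" "a < c" "c \<le> n"
    and "u0 \<in> perms n" "v0 \<in> perms n" "(a,c) \<notin> inv_set n u0"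
    "inv_set n v0 = insert (a,c) (inv_set n u0)"
    "cut_inversions n (arc n a c S) - {(a,c)} \<subseteq> inv_set n u0" "(u0,v0) \<in> \<Theta>"
  shows "arc_contracted n \<Theta> a c S"
  using arc_contracted_of_lower_cover_contracted[OF cong ac]
    lower_cover_contracted_of_edge[OF assms] by blast

lemma arc_Diff_subset_rank_inversions:
  assumes "a < c"
    and "\<And>p q. p = a \<or> (p \<in> S \<and> a < p \<and> p < c) \<Longrightarrow> q = c \<or> (q \<notin> S \<and> a < q \<and> q < c) \<Longrightarrow>
           p < q \<Longrightarrow> (p,q) \<noteq> (a,c) \<Longrightarrow> r q < r p"
  shows "cut_inversions n (arc n a c S) - {(a,c)} \<subseteq> rank_inversions n r"
proof
  fix e assume e: "e \<in> cut_inversions n (arc n a c S) - {(a,c)}"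
  obtain p q where e_pq: "e = (p,q)" by fastforce
  have pq: "(p,q) \<in> cut_inversions n (arc n a c S)" "(p,q) \<noteq> (a,c)" using e e_pq by auto
  note D = cut_inversions_arcD[OF pq(1) assms(1)]
  have "r q < r p" using assms(2)[OF D(4) D(5) D(2)] pq(2) by blast
  then show "e \<in> rank_inversions n r" using D(1-3) e_pq unfolding rank_inversions_def by blast
qed

context
  fixes n a b c :: nat
  assumes abc: "1 \<le> a" "a < b" "b < c" "c \<le> n"
begin

lemma hex_rank_eq:
  "hex_rank a b c L ka kb kc a = ka" "hex_rank a b c L ka kb kc b = kb"
  "hex_rank a b c L ka kb kc c = kc"
  "d \<notin> {a,b,c} \<Longrightarrow> hex_rank a b c L ka kb kc d = (if L d then 0 else 4)"
  using abc unfolding hex_rank_def by auto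

lemma arc_ab_below_hex_123:
  assumes "\<And>d. a < d \<Longrightarrow> d < b \<Longrightarrow> L d \<longleftrightarrow> d \<notin> S"
  shows "cut_inversions n (arc n a b S) - {(a,b)} \<subseteq> inv_set n (hex_perm n a b c L 1 2 3)"
  unfolding hex_perm_spec
  by (rule arc_Diff_subset_rank_inversions) (use abc assms in \<open>auto simp: hex_rank_eq\<close>)

lemma arc_bc_below_hex_123:
  assumes "\<And>d. b < d \<Longrightarrow> d < c \<Longrightarrow> L d \<longleftrightarrow> d \<notin> S"
  shows "cut_inversions n (arc n b c S) - {(b,c)} \<subseteq> inv_set n (hex_perm n a b c L 1 2 3)"
  unfolding hex_perm_spec
  by (rule arc_Diff_subset_rank_inversions) (use abc assms in \<open>auto simp: hex_rank_eq\<close>)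

lemma arc_ac_below_hex_132:
  assumes "b \<in> S" and L: "\<And>d. a < d \<Longrightarrow> d < c \<Longrightarrow> d \<noteq> b \<Longrightarrow> L d \<longleftrightarrow> d \<notin> S"
  shows "cut_inversions n (arc n a c S) - {(a,c)} \<subseteq> inv_set n (hex_perm n a b c L 1 3 2)"
  unfolding hex_perm_spec
proof (rule arc_Diff_subset_rank_inversions)
  let ?r = "hex_rank a b c L 1 3 2"
  fix p q assume p: "p = a \<or> (p \<in> S \<and> a < p \<and> p < c)" and q: "q = c \<or> (q \<notin> S \<and> a < q \<and> q < c)"
    and "(p,q) \<noteq> (a,c)"
  have "q \<noteq> c \<Longrightarrow> q \<notin> {a,b,c} \<and> L q" using q L \<open>b \<in> S\<close> by auto
  then have low: "?r q \<le> 2" "q \<noteq> c \<Longrightarrow> ?r q = 0"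
    by (cases "q = c"; auto simp: hex_rank_eq)+
  have "p \<noteq> a \<Longrightarrow> 3 \<le> ?r p"
    using p L abc by (cases "p = b") (auto simp: hex_rank_eq)
  then show "?r q < ?r p" using low \<open>(p,q) \<noteq> (a,c)\<close> by (cases "p = a") (auto simp: hex_rank_eq)
qed (use abc in auto)

lemma arc_ac_below_hex_213:
  assumes "b \<notin> S" and L: "\<And>d. a < d \<Longrightarrow> d < c \<Longrightarrow> d \<noteq> b \<Longrightarrow> L d \<longleftrightarrow> d \<notin> S"
  shows "cut_inversions n (arc n a c S) - {(a,c)} \<subseteq> inv_set n (hex_perm n a b c L 2 1 3)"
  unfolding hex_perm_spec
proof (rule arc_Diff_subset_rank_inversions)
  let ?r = "hex_rank a b c L 2 1 3"
  fix p q assume p: "p = a \<or> (p \<in> S \<and> a < p \<and> p < c)" and q: "q = c \<or> (q \<notin> S \<and> a < q \<and> q < c)"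
    and "(p,q) \<noteq> (a,c)"
  have low: "?r q \<le> 3" "q \<noteq> c \<Longrightarrow> ?r q \<le> 1"
    using q L abc by (cases "q = b"; auto simp: hex_rank_eq)+
  have "p \<noteq> a \<Longrightarrow> p \<notin> {a,b,c} \<and> \<not> L p" using p L \<open>b \<notin> S\<close> by auto
  then have "p \<noteq> a \<Longrightarrow> ?r p = 4" by (auto simp: hex_rank_eq)
  then show "?r q < ?r p" using low \<open>(p,q) \<noteq> (a,c)\<close> by (cases "p = a") (auto simp: hex_rank_eq)
qed (use abc in auto)

lemma hex_edges_of_arc_contracted:
  assumes L: "\<And>d. a < d \<Longrightarrow> d < c \<Longrightarrow> L d \<longleftrightarrow> d \<notin> S"
  defines "h ka kb kc \<equiv> hex_perm n a b c L ka kb kc"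
  shows "arc_contracted n \<Theta> a b S \<Longrightarrow> (h 1 2 3, h 2 1 3) \<in> \<Theta> \<and> (h 2 3 1, h 3 2 1) \<in> \<Theta>"
    and "arc_contracted n \<Theta> b c S \<Longrightarrow> (h 1 2 3, h 1 3 2) \<in> \<Theta> \<and> (h 3 1 2, h 3 2 1) \<in> \<Theta>"
proof -
  note H = hex_inversions[OF abc, of L, folded h_def]
  have perm: "h ka kb kc \<in> perms n" for ka kb kc unfolding h_def by (rule hex_perm_spec)
  have ne: "(a,b) \<noteq> (a,c)" "(a,b) \<noteq> (b,c)" "(b,c) \<noteq> (a,c)" using abc by auto
  show "(h 1 2 3, h 2 1 3) \<in> \<Theta> \<and> (h 2 3 1, h 3 2 1) \<in> \<Theta>" if old: "arc_contracted n \<Theta> a b S"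
  proof -
    have low: "cut_inversions n (arc n a b S) - {(a,b)} \<subseteq> inv_set n (h 1 2 3)"
      unfolding h_def using L abc by (intro arc_ab_below_hex_123) auto
    note edge = old[unfolded arc_contracted_def, rule_format, OF perm perm]
    have "(h 1 2 3, h 2 1 3) \<in> \<Theta>" by (rule edge) (use low H in auto)
    moreover have "(h 2 3 1, h 3 2 1) \<in> \<Theta>" by (rule edge) (use low H ne in auto)
    ultimately show ?thesis ..
  qed
  show "(h 1 2 3, h 1 3 2) \<in> \<Theta> \<and> (h 3 1 2, h 3 2 1) \<in> \<Theta>" if old: "arc_contracted n \<Theta> b c S"
  proof -
    have low: "cut_inversions n (arc n b c S) - {(b,c)} \<subseteq> inv_set n (h 1 2 3)"
      unfolding h_def using L abc by (intro arc_bc_below_hex_123) auto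
    note edge = old[unfolded arc_contracted_def, rule_format, OF perm perm]
    have "(h 1 2 3, h 1 3 2) \<in> \<Theta>" by (rule edge) (use low H in auto)
    moreover have "(h 3 1 2, h 3 2 1) \<in> \<Theta>" by (rule edge) (use low H ne in auto)
    ultimately show ?thesis ..
  qed
qed

lemma arc_contracted_of_hex_edge:
  assumes cong: "lattice_congruence n \<Theta>"
    and L: "\<And>d. a < d \<Longrightarrow> d < c \<Longrightarrow> d \<noteq> b \<Longrightarrow> L d \<longleftrightarrow> d \<notin> S"
  defines "h ka kb kc \<equiv> hex_perm n a b c L ka kb kc"
  shows "b \<in> S \<Longrightarrow> (h 1 3 2, h 2 3 1) \<in> \<Theta> \<Longrightarrow> arc_contracted n \<Theta> a c S"
    and "b \<notin> S \<Longrightarrow> (h 2 1 3, h 3 1 2) \<in> \<Theta> \<Longrightarrow> arc_contracted n \<Theta> a c S"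
proof -
  note H = hex_inversions[OF abc, of L, folded h_def]
  have perm: "h ka kb kc \<in> perms n" for ka kb kc unfolding h_def by (rule hex_perm_spec)
  have ac: "1 \<le> a" "a < c" "c \<le> n" using abc by auto
  have ne: "(a,b) \<noteq> (a,c)" "(b,c) \<noteq> (a,c)" using abc by auto
  show "arc_contracted n \<Theta> a c S" if "b \<in> S" "(h 1 3 2, h 2 3 1) \<in> \<Theta>"
    by (rule arc_contracted_of_edge[OF cong ac perm perm _ _ _ that(2)])
      (use H ne arc_ac_below_hex_132[OF that(1) L] in \<open>auto simp: h_def\<close>)
  show "arc_contracted n \<Theta> a c S" if "b \<notin> S" "(h 2 1 3, h 3 1 2) \<in> \<Theta>"
    by (rule arc_contracted_of_edge[OF cong ac perm perm _ _ _ that(2)])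
      (use H ne arc_ac_below_hex_213[OF that(1) L] in \<open>auto simp: h_def\<close>)
qed

text \<open>Extending a contracted arc across \<open>b\<close>: the old arc contracts an edge of the hexagon
  at \<open>a < b < c\<close> with \<open>L d \<longleftrightarrow> d \<notin> S\<close>, and polygon forcing yields the edge contracting
  the new arc.\<close>

lemma arc_contracted_extend_right:
  assumes cong: "lattice_congruence n \<Theta>" and old: "arc_contracted n \<Theta> a b S0"
    and agree: "\<And>d. a < d \<Longrightarrow> d < b \<Longrightarrow> d \<in> S \<longleftrightarrow> d \<in> S0"
  shows "arc_contracted n \<Theta> a c S"
proof -
  let ?L = "\<lambda>d. d \<notin> S"
  have "arc_contracted n \<Theta> a b S" using old arc_cong[of a b S S0] agree by (simp add: arc_contracted_def)
  then have E: "(hex_perm n a b c ?L 1 2 3, hex_perm n a b c ?L 2 1 3) \<in> \<Theta>"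
      "(hex_perm n a b c ?L 2 3 1, hex_perm n a b c ?L 3 2 1) \<in> \<Theta>"
    using hex_edges_of_arc_contracted(1) by auto
  show ?thesis
  proof (cases "b \<in> S")
    case True
    then show ?thesis
      using arc_contracted_of_hex_edge(1)[OF cong] hexagon_forcing(1)[OF abc cong E(1)] by auto
  next
    case False
    then show ?thesis
      using arc_contracted_of_hex_edge(2)[OF cong] hexagon_forcing(3)[OF abc cong E(2)] by auto
  qed
qed

lemma arc_contracted_extend_left:
  assumes cong: "lattice_congruence n \<Theta>" and old: "arc_contracted n \<Theta> b c S0"
    and agree: "\<And>d. b < d \<Longrightarrow> d < c \<Longrightarrow> d \<in> S \<longleftrightarrow> d \<in> S0"
  shows "arc_contracted n \<Theta> a c S"
proof -
  let ?L = "\<lambda>d. d \<notin> S"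
  have "arc_contracted n \<Theta> b c S" using old arc_cong[of b c S S0] agree by (simp add: arc_contracted_def)
  then have E: "(hex_perm n a b c ?L 1 2 3, hex_perm n a b c ?L 1 3 2) \<in> \<Theta>"
      "(hex_perm n a b c ?L 3 1 2, hex_perm n a b c ?L 3 2 1) \<in> \<Theta>"
    using hex_edges_of_arc_contracted(2) by auto
  show ?thesis
  proof (cases "b \<in> S")
    case True
    then show ?thesis
      using arc_contracted_of_hex_edge(1)[OF cong] hexagon_forcing(4)[OF abc cong E(2)] by auto
  next
    case False
    then show ?thesis
      using arc_contracted_of_hex_edge(2)[OF cong] hexagon_forcing(2)[OF abc cong E(1)] by auto
  qed
qed

end

definition G_congruence :: "nat \<Rightarrow> (nat \<Rightarrow> bool) \<Rightarrow> ((nat \<Rightarrow> nat) \<times> (nat \<Rightarrow> nat)) set \<Rightarrow> bool" where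
  "G_congruence n up \<Theta> \<longleftrightarrow> lattice_congruence n \<Theta> \<and> (\<forall>(s,t) \<in> diagram_edges n up. (t, t \<circ> s) \<in> \<Theta>)"

lemma Theta_G_eq: "Theta_G n up = \<Inter> {\<Theta>. G_congruence n up \<Theta>}"
  unfolding Theta_G_def G_congruence_def ..

lemma arc_contracted_generator:
  assumes G: "G_congruence n up \<Theta>" and b: "2 \<le> b" "b \<le> n - 1" and wrong: "b \<in> S \<longleftrightarrow> \<not> up b"
  shows "arc_contracted n \<Theta> (b - 1) (Suc b) S"
proof -
  obtain s t where st: "(s,t) = (if up b then (simple_transp b, simple_transp (b - 1))
                                  else (simple_transp (b - 1), simple_transp b))"
    by (metis surj_pair)
  note D = diagram_edge_inv_sets[where s = s and t = t and up = up, OF b st]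
  have ac: "1 \<le> b - 1" "b - 1 < Suc b" "Suc b \<le> n" using b by auto
  have "cut_inversions n (arc n (b - 1) (Suc b) S) - {(b - 1, Suc b)} \<subseteq> inv_set n t"
  proof
    fix e assume e: "e \<in> cut_inversions n (arc n (b - 1) (Suc b) S) - {(b - 1, Suc b)}"
    obtain p q where e_pq: "e = (p,q)" by fastforce
    have "(p,q) \<in> cut_inversions n (arc n (b - 1) (Suc b) S)" "(p,q) \<noteq> (b - 1, Suc b)"
      using e e_pq by auto
    note C = cut_inversions_arcD[OF this(1) ac(2)] this(2)
    have between: "x = b" if "b - 1 < x" "x < Suc b" for x using that b by auto
    have "(p,q) = (if up b then (b - 1, b) else (b, Suc b))"
      using C wrong between[of p] between[of q] by (cases "up b") auto
    then show "e \<in> inv_set n t" using D(4) e_pq by auto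
  qed
  moreover have "(t, t \<circ> s) \<in> \<Theta>" using G D(1) unfolding G_congruence_def by blast
  moreover have "(b - 1, Suc b) \<notin> inv_set n t" using D(4) b by auto
  ultimately show ?thesis
    using G D(2,3,5) unfolding G_congruence_def by (blast intro: arc_contracted_of_edge[OF _ ac])
qed

text \<open>A \<open>G\<close>-congruence contracts every arc that disagrees with the orientation at some \<open>b\<close>:
  the generator at \<open>b\<close> contracts the arc from \<open>b - 1\<close> to \<open>b + 1\<close>, which is then extended to
  the right and to the left.\<close>

lemma arc_contracted_of_disagreement:
  assumes G: "G_congruence n up \<Theta>" and mbM: "1 \<le> m" "m < b" "b < M" "M \<le> n"
    and wrong: "b \<in> S \<longleftrightarrow> \<not> up b"
  shows "arc_contracted n \<Theta> m M S"
proof -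
  have cong: "lattice_congruence n \<Theta>" using G unfolding G_congruence_def by blast
  have gen: "arc_contracted n \<Theta> (b - 1) (Suc b) S"
    using arc_contracted_generator[OF G _ _ wrong] mbM by auto
  have right: "arc_contracted n \<Theta> (b - 1) M S"
  proof (cases "Suc b < M")
    case True
    show ?thesis
      by (rule arc_contracted_extend_right[where a = "b - 1" and b = "Suc b", OF _ _ True _ cong gen])
        (use mbM in auto)
  next
    case False
    then have "M = Suc b" using mbM by auto
    then show ?thesis using gen by simp
  qed
  show ?thesis
  proof (cases "m < b - 1")
    case True
    show ?thesis
      by (rule arc_contracted_extend_left[where b = "b - 1", OF _ True _ _ cong right])
        (use mbM in auto)
  next
    case False
    then have "m = b - 1" using mbM by auto
    then show ?thesis using right by simp
  qed
qed

lemma gamma_of_arc_contracted: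
  assumes mbM: "1 \<le> m" "m < b" "b < M" "M \<le> n" and wrong: "b \<in> S \<longleftrightarrow> \<not> up b"
  shows "contracts n (Theta_G n up) (gamma_of n (arc n m M S))"
proof -
  have mM: "1 \<le> m" "m < M" "M \<le> n" using mbM by auto
  let ?\<gamma> = "gamma_of n (arc n m M S)"
  note J = gamma_of_arc_join_irreducible[OF mM, of S]
  note gamma = gamma_of_perm_inv_set[OF arc_subset[OF mM], of S]
  have "(?\<gamma>, lower_cover n ?\<gamma>) \<in> \<Theta>" if G: "G_congruence n up \<Theta>" for \<Theta>
  proof -
    have "inv_set n ?\<gamma> = insert (m,M) (inv_set n (lower_cover n ?\<gamma>))"
      using J(4) gamma(2) cut_inversions_arc_mem[OF mM] by auto
    then have "(lower_cover n ?\<gamma>, ?\<gamma>) \<in> \<Theta>"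
      using arc_contracted_of_disagreement[OF G mbM wrong] J(3,4) gamma(1)
      unfolding arc_contracted_def by simp
    then show ?thesis using G lattice_congruence_sym unfolding G_congruence_def by blast
  qed
  then show ?thesis unfolding contracts_def Theta_G_eq by blast
qed

text \<open>When the arc follows the orientation, no \<open>d\<close> strictly between \<open>m\<close> and \<open>M\<close> forces
  the inversion \<open>(m,M)\<close>: up entries lie in the arc, down entries outside it.\<close>

lemma gamma_of_arc_up_not_contracted:
  assumes mM: "1 \<le> m" "m < M" "M \<le> n"
  shows "\<not> contracts n (Theta_G n up) (gamma_of n (arc n m M (Collect up)))"
proof
  let ?A = "arc n m M (Collect up)"
  let ?\<gamma> = "gamma_of n ?A"
  note J = gamma_of_arc_join_irreducible[OF mM, of "Collect up"]
  note gamma = gamma_of_perm_inv_set[OF arc_subset[OF mM], of "Collect up"]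
  assume "contracts n (Theta_G n up) ?\<gamma>"
  then have "(?\<gamma>, lower_cover n ?\<gamma>) \<in> forced_cong n up"
    using Theta_G_subset_forced_cong unfolding contracts_def by blast
  then have "unforced_inversions up (cut_inversions n ?A) =
      unforced_inversions up (cut_inversions n ?A - {(m,M)})"
    using unforced_inversions_forced_cong J(4) gamma(2) by metis
  moreover have "\<not> forced up (cut_inversions n ?A) m M"
    unfolding forced_def cut_inversions_def arc_def by auto
  then have "(m,M) \<in> unforced_inversions up (cut_inversions n ?A)"
    using cut_inversions_arc_mem[OF mM] unfolding unforced_inversions_def by blast
  ultimately show False unfolding unforced_inversions_def by blast
qed

theorem proposition6p7:
  fixes n :: nat and up :: "nat \<Rightarrow> bool" and m M :: nat
  assumes "1 \<le> m" and "m < M" and "M \<le> n"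
  shows "(\<exists>!g. join_irreducible n g \<and> \<not> contracts n (Theta_G n up) g \<and>
            has_left_reflection n g (transpose m M))
       \<and> (let A = {m} \<union> {b. m < b \<and> b < M \<and> up b} \<union> {b. M < b \<and> b \<le> n}
          in join_irreducible n (gamma_of n A) \<and> \<not> contracts n (Theta_G n up) (gamma_of n A) \<and>
             has_left_reflection n (gamma_of n A) (transpose m M))"
proof -
  note mM = assms
  define A where "A = arc n m M (Collect up)"
  have A_eq: "{m} \<union> {b. m < b \<and> b < M \<and> up b} \<union> {b. M < b \<and> b \<le> n} = A"
    unfolding A_def arc_def by auto
  have gamma_A: "join_irreducible n (gamma_of n A) \<and> \<not> contracts n (Theta_G n up) (gamma_of n A) \<and>
      has_left_reflection n (gamma_of n A) (transpose m M)"
    unfolding A_def using gamma_of_arc_join_irreducible[OF mM] gamma_of_arc_up_not_contracted[OF mM]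
    by blast
  have "g = gamma_of n A"
    if ji: "join_irreducible n g" and not_contracted: "\<not> contracts n (Theta_G n up) g"
      and refl: "has_left_reflection n g (transpose m M)" for g
  proof -
    obtain S where g: "g = gamma_of n (arc n m M S)"
      using join_irreducible_reflection_eq_gamma[OF mM ji refl] .
    have "b \<in> S \<longleftrightarrow> up b" if "m < b" "b < M" for b
      using gamma_of_arc_contracted[of m b M n S up] mM that not_contracted g by auto
    then have "arc n m M S = A" unfolding A_def by (intro arc_cong) simp
    then show ?thesis using g by simp
  qed
  then show ?thesis unfolding Let_def A_eq using gamma_A by blast
qed

end
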